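(* Let $\Omega\subset\mathbb R^d$ be a nonempty bounded open set and $\bar x_1,\bar x_2,\dots\in\Omega$ regularly distributed. Then for every $\tau>0$, $s\in\mathbb N$, $h\in H^{-s}(\Omega;\mathbb R^n)$ and $p\in[1,\infty)$, $\lim_{N\to\infty}W_p(\mathbf M_{N,\tau}(h),\gamma_{R_\tau h})=0$, where $\gamma_{R_\tau h}=(\mathrm{id},R_\tau h)_\#\bar\lambda_\Omega$.
   Context: $H^{-s}(\Omega)$ is the dual of $H^s_0(\Omega)$. Regularly distributed: $\frac1N\sum_{j=1}^N\varphi(\bar x_j)\to\frac1{\mathrm{vol}(\Omega)}\int_\Omega\varphi$ for all $\varphi\in C(\overline\Omega)$. $\mathbf M_N(g)=\frac1N\sum_{j=1}^N\delta_{(\bar x_j,g(\bar x_j))}$ and $\mathbf M_{N,\tau}(h)=\mathbf M_N(R_\tau h)$, where $R_\tau h=\rho_\tau*\mathcal E_0(\psi_\tau h)$, $\rho_\tau$ a mollifier supported in $B(0,\tau)$ with integral $1$, $\psi_\tau=\rho_\tau*\mathbf 1_{\Omega_\tau}$, $\Omega_\tau=\{x\in\Omega:\mathrm{dist}(x,\partial\Omega)>4\tau\}$, $\mathcal E_0$ extension by zero. $\bar\lambda_\Omega$ is normalized Lebesgue measure; $W_p$ the $p$-Wasserstein distance. *)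

theory Defs
  imports "HOL-Probability.Probability"
begin

text \<open>Iterated partial derivatives along a list of coordinate directions
  (the head of the list is the last derivative applied).\<close>
fun partials :: "'d::finite list \<Rightarrow> (real^'d \<Rightarrow> real) \<Rightarrow> (real^'d \<Rightarrow> real)" where
  "partials [] f = f"
| "partials (i # ks) f = (\<lambda>x. frechet_derivative (partials ks f) (at x) (axis i 1))"

definition smooth :: "(real^'d::finite \<Rightarrow> real) \<Rightarrow> bool" where
  "smooth f \<longleftrightarrow> (\<forall>ks x. partials ks f differentiable (at x))"

definition test_fun :: "(real^'d::finite) set \<Rightarrow> (real^'d \<Rightarrow> real) \<Rightarrow> bool" where
  "test_fun \<Omega> f \<longleftrightarrow> smooth f \<and> compact (closure {x. f x \<noteq> 0}) \<and> closure {x. f x \<noteq> 0} \<subseteq> \<Omega>"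

text \<open>H^s norm: square root of the sum over all derivatives of order at most s of the
  squared L^2 norms (an equivalent version of the usual multi-index norm).\<close>
definition Hs_norm :: "nat \<Rightarrow> (real^'d::finite \<Rightarrow> real) \<Rightarrow> real" where
  "Hs_norm s f = sqrt (\<Sum>ks\<in>{ks::'d list. length ks \<le> s}. \<integral>x. (partials ks f x)\<^sup>2 \<partial>lborel)"

text \<open>h is an element of H^{-s}(Omega; R^n) = (H^s_0(Omega))^n dual: a linear functional
  on C_c^infinity(Omega) (dense in H^s_0) that is bounded in the H^s norm.\<close>
definition H_minus :: "nat \<Rightarrow> (real^'d::finite) set \<Rightarrow> ((real^'d \<Rightarrow> real) \<Rightarrow> real^'n::finite) \<Rightarrow> bool" where
  "H_minus s \<Omega> h \<longleftrightarrow>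
     (\<forall>f g a b. test_fun \<Omega> f \<longrightarrow> test_fun \<Omega> g \<longrightarrow>
        h (\<lambda>x. a * f x + b * g x) = a *\<^sub>R h f + b *\<^sub>R h g) \<and>
     (\<exists>C. \<forall>f. test_fun \<Omega> f \<longrightarrow> norm (h f) \<le> C * Hs_norm s f)"

definition Omega_tau :: "(real^'d::finite) set \<Rightarrow> real \<Rightarrow> (real^'d) set" where
  "Omega_tau \<Omega> \<tau> = {x\<in>\<Omega>. infdist x (frontier \<Omega>) > 4 * \<tau>}"

definition psi_tau :: "(real^'d::finite) set \<Rightarrow> real \<Rightarrow> (real^'d \<Rightarrow> real) \<Rightarrow> real^'d \<Rightarrow> real" where
  "psi_tau \<Omega> \<tau> \<rho> y = (LINT z:Omega_tau \<Omega> \<tau>|lborel. \<rho> (y - z))"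

text \<open>R_tau h = rho_tau * E_0(psi_tau h); for a distribution T, (rho * T)(x) = T(rho(x - .)),
  and E_0(psi_tau h)(phi) = h(psi_tau phi).\<close>
definition R_tau :: "(real^'d::finite) set \<Rightarrow> real \<Rightarrow> (real^'d \<Rightarrow> real)
     \<Rightarrow> ((real^'d \<Rightarrow> real) \<Rightarrow> real^'n::finite) \<Rightarrow> real^'d \<Rightarrow> real^'n" where
  "R_tau \<Omega> \<tau> \<rho> h x = h (\<lambda>y. psi_tau \<Omega> \<tau> \<rho> y * \<rho> (x - y))"

definition mollifier :: "real \<Rightarrow> (real^'d::finite \<Rightarrow> real) \<Rightarrow> bool" where
  "mollifier \<tau> \<rho> \<longleftrightarrow> smooth \<rho> \<and> (\<forall>x. 0 \<le> \<rho> x) \<and> {x. \<rho> x \<noteq> 0} \<subseteq> ball 0 \<tau>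
      \<and> integral\<^sup>L lborel \<rho> = 1"

definition regularly_distributed :: "(real^'d::finite) set \<Rightarrow> (nat \<Rightarrow> real^'d) \<Rightarrow> bool" where
  "regularly_distributed \<Omega> xs \<longleftrightarrow> (\<forall>j\<ge>1. xs j \<in> \<Omega>) \<and>
     (\<forall>\<phi>::real^'d \<Rightarrow> real. continuous_on (closure \<Omega>) \<phi> \<longrightarrow>
        (\<lambda>N. (\<Sum>j=1..N. \<phi> (xs j)) / real N) \<longlonglongrightarrow> (LINT x:\<Omega>|lborel. \<phi> x) / measure lborel \<Omega>)"

definition empirical :: "nat \<Rightarrow> (nat \<Rightarrow> real^'d::finite) \<Rightarrow> (real^'d \<Rightarrow> real^'n::finite)
     \<Rightarrow> ((real^'d) \<times> (real^'n)) measure" where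
  "empirical N xs g = distr (uniform_measure (count_space UNIV) {1..N}) borel (\<lambda>j. (xs j, g (xs j)))"

definition graph_measure :: "(real^'d::finite) set \<Rightarrow> (real^'d \<Rightarrow> real^'n::finite)
     \<Rightarrow> ((real^'d) \<times> (real^'n)) measure" where
  "graph_measure \<Omega> g = distr (uniform_measure lborel \<Omega>) borel (\<lambda>x. (x, g x))"

definition couplings :: "'a::metric_space measure \<Rightarrow> 'a measure \<Rightarrow> ('a \<times> 'a) measure set" where
  "couplings \<mu> \<nu> = {\<pi>. sets \<pi> = sets (borel \<Otimes>\<^sub>M borel) \<and>
       distr \<pi> borel fst = \<mu> \<and> distr \<pi> borel snd = \<nu>}"

definition transport_cost :: "real \<Rightarrow> 'a::metric_space measure \<Rightarrow> 'a measure \<Rightarrow> ennreal" where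
  "transport_cost p \<mu> \<nu> = (INF \<pi>\<in>couplings \<mu> \<nu>. \<integral>\<^sup>+ z. ennreal (dist (fst z) (snd z) powr p) \<partial>\<pi>)"

definition wasserstein :: "real \<Rightarrow> 'a::metric_space measure \<Rightarrow> 'a measure \<Rightarrow> ennreal" where
  "wasserstein p \<mu> \<nu> = (if transport_cost p \<mu> \<nu> = \<top> then \<top>
      else ennreal (enn2real (transport_cost p \<mu> \<nu>) powr (1 / p)))"

end

theory Submission
  imports Defs
begin

(* R_tau h is h applied to the test function psi_tau * rho(x - .), whose derivatives of order
   at most s depend uniformly continuously on x and stay supported in a fixed compact subset of
   Omega; since h is bounded in the H^s norm, R_tau h is continuous. For a continuous g, cover
   the compact graph of g over the closure of Omega by finitely many balls of radius e/4 and take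
   a subordinate partition of unity. Coupling the empirical and the graph measure inside each
   ball, as far as their masses there agree, and coupling the leftovers independently costs at
   most (e/2)^p + diam^p * (sum of the mass differences); regular distribution of the points
   makes the mass differences tend to 0. *)

section \<open>Iterated partial derivatives\<close>

(* Unfolding partials (i # ks) in the simplifier would loop with frechet_derivative_partials. *)
declare partials.simps(2) [simp del]

lemma smooth_partials_differentiable: "smooth f \<Longrightarrow> partials ks f differentiable (at x)"
  by (simp add: smooth_def)

lemma smooth_partials_has_derivative:
  "smooth f \<Longrightarrow> (partials ks f has_derivative frechet_derivative (partials ks f) (at x)) (at x)"
  using smooth_partials_differentiable frechet_derivative_works by blast

lemma smooth_partials_continuous: "smooth f \<Longrightarrow> continuous_on UNIV (partials ks f)"
  by (meson continuous_at_imp_continuous_on differentiable_imp_continuous_within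
      smooth_partials_differentiable)

lemma frechet_derivative_partials:
  assumes "smooth f"
  shows "frechet_derivative (partials ks f) (at x) v = (\<Sum>i\<in>UNIV. v$i * partials (i#ks) f x)"
proof -
  have lin: "linear (frechet_derivative (partials ks f) (at x))"
    using smooth_partials_has_derivative[OF assms] has_derivative_linear by blast
  have "v = (\<Sum>i\<in>UNIV. v$i *\<^sub>R axis i 1)"
    using basis_expansion[of v] by (simp add: scalar_mult_eq_scaleR)
  then have "frechet_derivative (partials ks f) (at x) v
      = frechet_derivative (partials ks f) (at x) (\<Sum>i\<in>UNIV. v$i *\<^sub>R axis i 1)"
    by simp
  also have "\<dots> = (\<Sum>i\<in>UNIV. v$i * frechet_derivative (partials ks f) (at x) (axis i 1))"
    using lin by (simp add: linear_sum linear_scale)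
  finally show ?thesis by (simp add: partials.simps)
qed

lemma partials_Cons_from_has_derivative:
  "partials ks f = g \<Longrightarrow> (g has_derivative g') (at x) \<Longrightarrow> partials (i#ks) f x = g' (axis i 1)"
  by (simp add: partials.simps frechet_derivative_at[symmetric])

lemma partials_lincomb:
  assumes "smooth f" "smooth g"
  shows "partials ks (\<lambda>y. a * f y + b * g y) = (\<lambda>y. a * partials ks f y + b * partials ks g y)"
proof (induction ks)
  case (Cons i ks)
  show ?case
  proof
    fix x
    have "((\<lambda>y. a * partials ks f y + b * partials ks g y) has_derivative
       (\<lambda>v. a * frechet_derivative (partials ks f) (at x) v
          + b * frechet_derivative (partials ks g) (at x) v)) (at x)"
      using smooth_partials_has_derivative[OF assms(1)] smooth_partials_has_derivative[OF assms(2)]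
      by (intro derivative_eq_intros) auto
    from partials_Cons_from_has_derivative[OF Cons this]
    show "partials (i # ks) (\<lambda>y. a * f y + b * g y) x =
      a * partials (i # ks) f x + b * partials (i # ks) g x" by (simp add: partials.simps)
  qed
qed simp

lemma smooth_lincomb:
  assumes "smooth f" "smooth g"
  shows "smooth (\<lambda>y. a * f y + b * g y)"
  unfolding smooth_def partials_lincomb[OF assms]
  using smooth_partials_differentiable[OF assms(1)] smooth_partials_differentiable[OF assms(2)]
  by (auto intro!: derivative_intros)

lemma has_derivative_sum_list:
  assumes "\<And>p. p \<in> set L \<Longrightarrow> (F p has_derivative F' p) (at x)"
  shows "((\<lambda>y. \<Sum>p\<leftarrow>L. F p y) has_derivative (\<lambda>v. \<Sum>p\<leftarrow>L. F' p v)) (at x)"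
  using assms by (induction L) (auto intro!: has_derivative_add)

lemma differentiable_sum_list:
  "(\<And>p. p \<in> set L \<Longrightarrow> F p differentiable (at x)) \<Longrightarrow> (\<lambda>y. \<Sum>p\<leftarrow>L. F p y) differentiable (at x)"
  by (induction L) auto

(* The terms of the general Leibniz rule: a split records which directions fall on the first
   and which on the second factor of a product. *)
fun leibniz_splits :: "'a list \<Rightarrow> ('a list \<times> 'a list) list" where
  "leibniz_splits [] = [([], [])]"
| "leibniz_splits (i # ks) =
     map (\<lambda>p. (i # fst p, snd p)) (leibniz_splits ks) @ map (\<lambda>p. (fst p, i # snd p)) (leibniz_splits ks)"

lemma leibniz_splits_length:
  "p \<in> set (leibniz_splits ks) \<Longrightarrow> length (fst p) + length (snd p) = length ks"
  by (induction ks arbitrary: p) auto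

lemma length_leibniz_splits: "length (leibniz_splits ks) = 2 ^ length ks"
  by (induction ks) auto

lemma partials_mult:
  assumes "smooth f" "smooth g"
  shows "partials ks (\<lambda>y. f y * g y) =
    (\<lambda>y. \<Sum>p\<leftarrow>leibniz_splits ks. partials (fst p) f y * partials (snd p) g y)"
proof (induction ks)
  case (Cons i ks)
  show ?case
  proof
    fix x
    have "((\<lambda>y. \<Sum>p\<leftarrow>leibniz_splits ks. partials (fst p) f y * partials (snd p) g y) has_derivative
       (\<lambda>v. \<Sum>p\<leftarrow>leibniz_splits ks. partials (fst p) f x * frechet_derivative (partials (snd p) g) (at x) v
             + frechet_derivative (partials (fst p) f) (at x) v * partials (snd p) g x)) (at x)"
      using smooth_partials_has_derivative[OF assms(1)] smooth_partials_has_derivative[OF assms(2)]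
      by (intro has_derivative_sum_list has_derivative_mult) auto
    from partials_Cons_from_has_derivative[OF Cons this]
    show "partials (i # ks) (\<lambda>y. f y * g y) x =
        (\<Sum>p\<leftarrow>leibniz_splits (i#ks). partials (fst p) f x * partials (snd p) g x)"
      by (simp add: partials.simps sum_list_addf o_def add.commute)
  qed
qed simp

lemma smooth_mult:
  assumes "smooth f" "smooth g"
  shows "smooth (\<lambda>y. f y * g y)"
  unfolding smooth_def partials_mult[OF assms]
  using smooth_partials_differentiable[OF assms(1)] smooth_partials_differentiable[OF assms(2)]
  by (auto intro!: differentiable_sum_list differentiable_mult)

lemma has_derivative_partials_reflect:
  assumes "smooth f"
  shows "((\<lambda>y. partials ks f (x0 - y)) has_derivative
      (\<lambda>v. frechet_derivative (partials ks f) (at (x0 - x)) (- v))) (at x)"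
proof -
  have "((\<lambda>y. x0 - y) has_derivative uminus) (at x)"
    by (auto intro!: derivative_eq_intros)
  from has_derivative_compose[OF this smooth_partials_has_derivative[OF assms]]
  show ?thesis by (simp add: o_def)
qed

lemma partials_reflect:
  assumes "smooth f"
  shows "partials ks (\<lambda>y. f (x0 - y)) = (\<lambda>y. (-1) ^ length ks * partials ks f (x0 - y))"
proof (induction ks)
  case (Cons i ks)
  show ?case
  proof
    fix x
    have lin: "linear (frechet_derivative (partials ks f) (at (x0 - x)))"
      using smooth_partials_has_derivative[OF assms] has_derivative_linear by blast
    have "((\<lambda>y. (-1) ^ length ks * partials ks f (x0 - y)) has_derivative
       (\<lambda>v. (-1) ^ length ks * frechet_derivative (partials ks f) (at (x0 - x)) (- v))) (at x)"
      using has_derivative_partials_reflect[OF assms] by (intro derivative_eq_intros) auto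
    from partials_Cons_from_has_derivative[OF Cons this]
    show "partials (i # ks) (\<lambda>y. f (x0 - y)) x = (-1) ^ length (i#ks) * partials (i#ks) f (x0 - x)"
      using linear_neg[OF lin] by (simp add: partials.simps)
  qed
qed simp

lemma smooth_reflect:
  assumes "smooth f"
  shows "smooth (\<lambda>y. f (x0 - y))"
proof -
  have "(\<lambda>y. partials ks f (x0 - y)) differentiable (at x)" for ks x
    using has_derivative_partials_reflect[OF assms] by (auto simp: differentiable_def)
  then show ?thesis
    unfolding smooth_def partials_reflect[OF assms] by (auto intro!: differentiable_mult)
qed

lemma partials_eq_0_on_open:
  assumes "smooth f" "open U" "\<And>y. y \<in> U \<Longrightarrow> f y = 0" "y \<in> U"
  shows "partials ks f y = 0"
  using assms(4)
proof (induction ks arbitrary: y)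
  case (Cons i ks)
  have "(partials ks f has_derivative (\<lambda>_. 0)) (at y)"
    using has_derivative_transform_within_open[of "\<lambda>_. 0" "\<lambda>_. 0" y UNIV U "partials ks f"]
      Cons assms(2) by auto
  then show ?case by (simp add: partials.simps frechet_derivative_at[symmetric])
qed (use assms(3) in simp)

lemma partials_eq_0_outside_closed:
  "smooth f \<Longrightarrow> closed K \<Longrightarrow> {y. f y \<noteq> 0} \<subseteq> K \<Longrightarrow> y \<notin> K \<Longrightarrow> partials ks f y = 0"
  using partials_eq_0_on_open[of f "- K"] by (auto simp: open_Compl)

section \<open>Convolution with the indicator of a set\<close>

lemma bounded_range_if_vanishing_outside_compact:
  fixes f :: "'a::topological_space \<Rightarrow> 'b::real_normed_vector"
  assumes "continuous_on UNIV f" "compact K" "{y. f y \<noteq> 0} \<subseteq> K"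
  shows "bounded (range f)"
proof -
  have "bounded (f ` K)"
    using compact_continuous_image[OF continuous_on_subset[OF assms(1)] assms(2)]
    by (auto intro: compact_imp_bounded)
  moreover have "range f \<subseteq> insert 0 (f ` K)" using assms(3) by auto
  ultimately show ?thesis by (meson bounded_insert bounded_subset)
qed

lemma uniformly_continuous_if_vanishing_outside_cball:
  fixes f :: "'a::euclidean_space \<Rightarrow> 'b::real_normed_vector"
  assumes "continuous_on UNIV f" "{y. f y \<noteq> 0} \<subseteq> cball 0 R"
  shows "uniformly_continuous_on UNIV f"
  unfolding uniformly_continuous_on_def
proof (intro allI impI)
  fix e :: real assume e: "e > 0"
  have "uniformly_continuous_on (cball 0 (R + 1)) f"
    using compact_uniformly_continuous[OF continuous_on_subset[OF assms(1)]] by auto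
  then obtain d where d: "d > 0"
    "\<And>x y. x \<in> cball 0 (R + 1) \<Longrightarrow> y \<in> cball 0 (R + 1) \<Longrightarrow> dist y x < d \<Longrightarrow> dist (f y) (f x) < e"
    using e unfolding uniformly_continuous_on_def by metis
  show "\<exists>d>0. \<forall>x\<in>UNIV. \<forall>y\<in>UNIV. dist y x < d \<longrightarrow> dist (f y) (f x) < e"
  proof (intro exI[of _ "min d 1"] conjI ballI impI)
    fix x y :: 'a assume xy: "dist y x < min d 1"
    show "dist (f y) (f x) < e"
    proof (cases "x \<in> cball 0 R \<or> y \<in> cball 0 R")
      case True
      then have "x \<in> cball 0 (R + 1)" "y \<in> cball 0 (R + 1)"
        using xy dist_triangle[of 0 x y] dist_triangle[of 0 y x] by (auto simp: dist_commute)
      then show ?thesis using d(2) xy by simp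
    next
      case False
      then have "f x = 0" "f y = 0" using assms(2) by auto
      then show ?thesis using e by simp
    qed
  qed (use d in simp)
qed

lemma set_integrable_bounded_continuous:
  fixes f :: "'a::euclidean_space \<Rightarrow> real"
  assumes "continuous_on UNIV f" "bounded (range f)" "A \<in> sets lborel" "emeasure lborel A < \<infinity>"
  shows "set_integrable lborel A f"
proof -
  obtain B where "\<And>y. norm (f y) \<le> B" using assms(2) by (auto simp: bounded_iff)
  then show ?thesis
    unfolding set_integrable_def using assms(3,4) borel_measurable_continuous_onI[OF assms(1)]
    by (intro integrableI_bounded_set[where A = A and B = B]) (auto split: split_indicator)
qed

lemma abs_set_integral_le:
  fixes g :: "'a \<Rightarrow> real"
  assumes "set_integrable M A g" "\<And>z. z \<in> A \<Longrightarrow> \<bar>g z\<bar> \<le> c" "A \<in> sets M" "emeasure M A < \<infinity>"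
  shows "\<bar>LINT z:A|M. g z\<bar> \<le> measure M A * c"
proof -
  have const: "set_integrable M A (\<lambda>_. c)"
    using assms(3,4) unfolding set_integrable_def by (rule integrable_indicator)
  have "\<bar>LINT z:A|M. g z\<bar> \<le> (LINT z:A|M. \<bar>g z\<bar>)"
    using set_integral_norm_bound[OF assms(1)] by simp
  also have "\<dots> \<le> (LINT z:A|M. c)"
    using assms(1,2) const by (intro set_integral_mono) (auto simp: set_integrable_abs)
  also have "\<dots> = measure M A * c"
    using assms(3,4) by (simp add: set_integral_const)
  finally show ?thesis .
qed

lemma uniformly_continuous_frechet_derivative_partials:
  fixes f :: "real^'d \<Rightarrow> real"
  assumes sm: "smooth f" and supp: "{y. f y \<noteq> 0} \<subseteq> cball 0 R" and e: "e > 0"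
  obtains d where "d > 0" "\<And>x u. dist x u < d \<Longrightarrow>
    onorm (frechet_derivative (partials ks f) (at x) - frechet_derivative (partials ks f) (at u)) \<le> e"
proof -
  define c where "c = e / real CARD('d)"
  have c: "c > 0" using e by (simp add: c_def)
  have "{y. partials (i#ks) f y \<noteq> 0} \<subseteq> cball 0 R" for i
    using partials_eq_0_outside_closed[OF sm closed_cball supp] by blast
  then have "uniformly_continuous_on UNIV (partials (i#ks) f)" for i
    by (intro uniformly_continuous_if_vanishing_outside_cball[OF smooth_partials_continuous[OF sm]])
  then have "\<forall>i. \<exists>d>0. \<forall>x y. dist y x < d \<longrightarrow> dist (partials (i#ks) f y) (partials (i#ks) f x) < c"
    using c unfolding uniformly_continuous_on_def by blast
  then obtain d where d: "\<And>i. d i > 0"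
    "\<And>i x y. dist y x < d i \<Longrightarrow> dist (partials (i#ks) f y) (partials (i#ks) f x) < c"
    by metis
  define d0 where "d0 = Min (range d)"
  have d0: "d0 > 0" "\<And>i. d0 \<le> d i" unfolding d0_def using d(1) by (auto simp: Min_gr_iff)
  let ?D = "\<lambda>x. frechet_derivative (partials ks f) (at x)"
  have "onorm (?D x - ?D u) \<le> e" if x: "dist x u < d0" for x u
  proof (rule onorm_le)
    fix w :: "real^'d"
    have "norm ((?D x - ?D u) w) = \<bar>\<Sum>i\<in>UNIV. w$i * (partials (i#ks) f x - partials (i#ks) f u)\<bar>"
      by (simp add: frechet_derivative_partials[OF sm] sum_subtractf algebra_simps)
    also have "\<dots> \<le> (\<Sum>i\<in>UNIV. \<bar>w$i\<bar> * c)"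
    proof (rule order.trans[OF sum_abs sum_mono])
      fix i
      have "dist x u < d i" using x d0(2)[of i] by simp
      then have "dist (partials (i#ks) f x) (partials (i#ks) f u) < c" by (rule d(2))
      then have "\<bar>partials (i#ks) f x - partials (i#ks) f u\<bar> \<le> c" by (simp add: dist_real_def)
      then show "\<bar>w$i * (partials (i#ks) f x - partials (i#ks) f u)\<bar> \<le> \<bar>w$i\<bar> * c"
        unfolding abs_mult by (rule mult_left_mono) simp
    qed
    also have "\<dots> \<le> (\<Sum>i\<in>(UNIV::'d set). norm w * c)"
      using c by (intro sum_mono mult_right_mono) (auto simp: component_le_norm_cart)
    also have "\<dots> = e * norm w" using c by (simp add: c_def)
    finally show "norm ((?D x - ?D u) w) \<le> e * norm w" .
  qed
  with d0(1) show thesis by (rule that)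
qed

lemma smooth_uniform_linearization:
  fixes f :: "real^'d \<Rightarrow> real"
  assumes sm: "smooth f" and supp: "{y. f y \<noteq> 0} \<subseteq> cball 0 R" and e: "e > 0"
  obtains d where "d > 0" "\<And>u v. norm v < d \<Longrightarrow>
    \<bar>partials ks f (u + v) - partials ks f u - (\<Sum>i\<in>UNIV. v$i * partials (i#ks) f u)\<bar> \<le> e * norm v"
proof -
  let ?D = "\<lambda>x. frechet_derivative (partials ks f) (at x)"
  obtain d where d: "d > 0" "\<And>x u. dist x u < d \<Longrightarrow> onorm (?D x - ?D u) \<le> e"
    by (rule uniformly_continuous_frechet_derivative_partials[OF sm supp e, where ks = ks]) blast
  have "\<bar>partials ks f (u + v) - partials ks f u - (\<Sum>i\<in>UNIV. v$i * partials (i#ks) f u)\<bar> \<le> e * norm v"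
    if v: "norm v < d" for u v
  proof -
    have "u + t *\<^sub>R (u + v - u) \<in> ball u d" if "t \<in> {0..1}" for t
    proof -
      have "norm (t *\<^sub>R v) \<le> norm v" using that by (simp add: mult_left_le_one_le)
      then show ?thesis using v by (simp add: dist_norm)
    qed
    then have "norm (partials ks f (u + v) - partials ks f u - ?D u (u + v - u)) \<le> norm (u + v - u) * e"
      using smooth_partials_has_derivative[OF sm] d
      by (intro differentiable_bound_linearization[where S = "ball u d"])
        (auto intro: has_derivative_at_withinI simp: dist_commute)
    then show ?thesis by (simp add: frechet_derivative_partials[OF sm] mult.commute)
  qed
  with d(1) show thesis by (rule that)
qed

lemma set_integral_sum:
  fixes f :: "'i \<Rightarrow> 'a \<Rightarrow> real"
  assumes "\<And>i. i \<in> I \<Longrightarrow> set_integrable M A (f i)"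
  shows "set_integrable M A (\<lambda>z. \<Sum>i\<in>I. f i z)"
    and "(LINT z:A|M. \<Sum>i\<in>I. f i z) = (\<Sum>i\<in>I. LINT z:A|M. f i z)"
  using assms unfolding set_integrable_def set_lebesgue_integral_def scaleR_sum_right
  by (auto intro!: Bochner_Integration.integral_sum)

lemma set_integrable_translate_smooth:
  fixes f :: "real^'d \<Rightarrow> real"
  assumes sm: "smooth f" and supp: "{y. f y \<noteq> 0} \<subseteq> cball 0 R"
    and A: "A \<in> sets lborel" "emeasure lborel A < \<infinity>"
  shows "set_integrable lborel A (\<lambda>z. partials ks f (x - z))"
proof (rule set_integrable_bounded_continuous[OF _ _ A])
  have "{y. partials ks f y \<noteq> 0} \<subseteq> cball 0 R"
    using partials_eq_0_outside_closed[OF sm closed_cball supp] by blast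
  then have "bounded (range (partials ks f))"
    by (intro bounded_range_if_vanishing_outside_compact[OF smooth_partials_continuous[OF sm]]) auto
  then show "bounded (range (\<lambda>z. partials ks f (x - z)))"
    by (rule bounded_subset) auto
  show "continuous_on UNIV (\<lambda>z. partials ks f (x - z))"
    by (rule continuous_on_compose2[OF smooth_partials_continuous[OF sm]]) (auto intro!: continuous_intros)
qed

lemma abs_convolution_indicator_linearization_le:
  fixes f :: "real^'d \<Rightarrow> real"
  assumes sm: "smooth f" and supp: "{y. f y \<noteq> 0} \<subseteq> cball 0 R"
    and A: "A \<in> sets lborel" "emeasure lborel A < \<infinity>"
    and lin: "\<And>u. \<bar>partials ks f (u + v) - partials ks f u - (\<Sum>i\<in>UNIV. v$i * partials (i#ks) f u)\<bar> \<le> c"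
  shows "\<bar>(LINT z:A|lborel. partials ks f (y + v - z)) - (LINT z:A|lborel. partials ks f (y - z))
      - (\<Sum>i\<in>UNIV. v$i * (LINT z:A|lborel. partials (i#ks) f (y - z)))\<bar> \<le> measure lborel A * c"
proof -
  note integrable = set_integrable_translate_smooth[OF sm supp A]
  have sum: "set_integrable lborel A (\<lambda>z. \<Sum>i\<in>UNIV. v$i * partials (i#ks) f (y - z))"
    "(LINT z:A|lborel. \<Sum>i\<in>UNIV. v$i * partials (i#ks) f (y - z))
      = (\<Sum>i\<in>UNIV. v$i * (LINT z:A|lborel. partials (i#ks) f (y - z)))"
    using set_integral_sum[of UNIV lborel A "\<lambda>i z. v$i * partials (i#ks) f (y - z)"] integrable
    by auto
  have "(LINT z:A|lborel. partials ks f (y + v - z)) - (LINT z:A|lborel. partials ks f (y - z))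
      - (\<Sum>i\<in>UNIV. v$i * (LINT z:A|lborel. partials (i#ks) f (y - z)))
    = (LINT z:A|lborel. partials ks f (y + v - z) - partials ks f (y - z)
        - (\<Sum>i\<in>UNIV. v$i * partials (i#ks) f (y - z)))"
    using integrable sum by (simp add: set_integral_diff)
  also have "\<bar>\<dots>\<bar> \<le> measure lborel A * c"
  proof (rule abs_set_integral_le[OF _ _ A])
    show "set_integrable lborel A (\<lambda>z. partials ks f (y + v - z) - partials ks f (y - z)
        - (\<Sum>i\<in>UNIV. v$i * partials (i#ks) f (y - z)))"
      using integrable sum by (intro set_integral_diff) auto
    fix z
    show "\<bar>partials ks f (y + v - z) - partials ks f (y - z)
        - (\<Sum>i\<in>UNIV. v$i * partials (i#ks) f (y - z))\<bar> \<le> c"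
      using lin[of "y - z"] by (simp add: algebra_simps)
  qed
  finally show ?thesis .
qed

(* Differentiation under the integral sign: the mean value inequality bounds the linearization
   error of the integrand uniformly in the integration variable. *)
lemma has_derivative_convolution_indicator:
  fixes f :: "real^'d \<Rightarrow> real"
  assumes sm: "smooth f" and supp: "{y. f y \<noteq> 0} \<subseteq> cball 0 R"
    and A: "A \<in> sets lborel" "emeasure lborel A < \<infinity>"
  shows "((\<lambda>y. LINT z:A|lborel. partials ks f (y - z)) has_derivative
          (\<lambda>v. \<Sum>i\<in>UNIV. v$i * (LINT z:A|lborel. partials (i#ks) f (y - z)))) (at y)"
  unfolding has_derivative_at_alt
proof (intro conjI allI impI)
  show "bounded_linear (\<lambda>v. \<Sum>i\<in>UNIV. v$i * (LINT z:A|lborel. partials (i#ks) f (y - z)))"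
    by (auto intro!: bounded_linear_intros)
  define m where "m = measure lborel A"
  have m: "m \<ge> 0" by (simp add: m_def)
  fix e :: real assume e: "e > 0"
  then have "e / (m + 1) > 0" using m by simp
  from smooth_uniform_linearization[OF sm supp this, where ks = ks]
  obtain d where d: "d > 0" "\<And>u v. norm v < d \<Longrightarrow>
      \<bar>partials ks f (u + v) - partials ks f u - (\<Sum>i\<in>UNIV. v$i * partials (i#ks) f u)\<bar>
        \<le> e / (m + 1) * norm v"
    by blast
  show "\<exists>d>0. \<forall>y'. norm (y' - y) < d \<longrightarrow>
      norm ((LINT z:A|lborel. partials ks f (y' - z)) - (LINT z:A|lborel. partials ks f (y - z))
        - (\<Sum>i\<in>UNIV. (y' - y)$i * (LINT z:A|lborel. partials (i#ks) f (y - z))))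
      \<le> e * norm (y' - y)"
  proof (intro exI[of _ d] conjI allI impI)
    fix y' :: "real^'d" assume "norm (y' - y) < d"
    from abs_convolution_indicator_linearization_le[OF sm supp A d(2)[OF this], where y = y]
    have "norm ((LINT z:A|lborel. partials ks f (y' - z)) - (LINT z:A|lborel. partials ks f (y - z))
        - (\<Sum>i\<in>UNIV. (y' - y)$i * (LINT z:A|lborel. partials (i#ks) f (y - z))))
      \<le> m * (e / (m + 1) * norm (y' - y))"
      by (simp add: m_def)
    also have "\<dots> \<le> e * norm (y' - y)"
      using m e by (simp add: field_simps mult_right_mono)
    finally show "norm ((LINT z:A|lborel. partials ks f (y' - z)) - (LINT z:A|lborel. partials ks f (y - z))
        - (\<Sum>i\<in>UNIV. (y' - y)$i * (LINT z:A|lborel. partials (i#ks) f (y - z))))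
      \<le> e * norm (y' - y)" .
  qed (use d in simp)
qed

lemma partials_convolution_indicator:
  fixes f :: "real^'d \<Rightarrow> real"
  assumes "smooth f" "{y. f y \<noteq> 0} \<subseteq> cball 0 R"
    "A \<in> sets lborel" "emeasure lborel A < \<infinity>"
  shows "partials ks (\<lambda>y. LINT z:A|lborel. f (y - z)) = (\<lambda>y. LINT z:A|lborel. partials ks f (y - z))"
proof (induction ks)
  case (Cons i ks)
  show ?case
  proof
    fix x
    have "(\<Sum>j\<in>UNIV. axis i 1 $ j * c j) = c i" for c :: "'d \<Rightarrow> real"
      by (simp add: axis_def if_distrib[of "\<lambda>a. a * _"] cong: if_cong)
    then show "partials (i # ks) (\<lambda>y. LINT z:A|lborel. f (y - z)) x
        = (LINT z:A|lborel. partials (i#ks) f (x - z))"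
      using partials_Cons_from_has_derivative[OF Cons has_derivative_convolution_indicator[OF assms]]
      by simp
  qed
qed simp

lemma smooth_convolution_indicator:
  fixes f :: "real^'d \<Rightarrow> real"
  assumes "smooth f" "{y. f y \<noteq> 0} \<subseteq> cball 0 R"
    "A \<in> sets lborel" "emeasure lborel A < \<infinity>"
  shows "smooth (\<lambda>y. LINT z:A|lborel. f (y - z))"
  unfolding smooth_def partials_convolution_indicator[OF assms] differentiable_def
  using has_derivative_convolution_indicator[OF assms] by blast

section \<open>Continuity of R_tau h\<close>

lemma finite_lists_length_le_UNIV: "finite {ks::'a::finite list. length ks \<le> s}"
  using finite_lists_length_le[of "UNIV::'a set" s] by simp

lemma Hs_norm_nonneg: "Hs_norm s f \<ge> 0"
  unfolding Hs_norm_def by (intro real_sqrt_ge_zero sum_nonneg integral_nonneg) auto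

lemma Hs_norm_le:
  fixes f :: "real^'d \<Rightarrow> real"
  assumes sm: "smooth f" and K: "compact K" and supp: "{y. f y \<noteq> 0} \<subseteq> K"
    and bnd: "\<And>ks y. length ks \<le> s \<Longrightarrow> \<bar>partials ks f y\<bar> \<le> \<eta>"
  shows "Hs_norm s f \<le> \<eta> * sqrt (real (card {ks::'d list. length ks \<le> s}) * measure lborel K)"
proof -
  have \<eta>: "\<eta> \<ge> 0" using bnd[of "[]"] by force
  have Ks: "K \<in> sets lborel" using compact_imp_closed[OF K] by simp
  have Kf: "emeasure lborel K < \<infinity>" using emeasure_bounded_finite[OF compact_imp_bounded[OF K]] .
  have "(\<integral>x. (partials ks f x)\<^sup>2 \<partial>lborel) \<le> \<eta>\<^sup>2 * measure lborel K" if ks: "length ks \<le> s" for ks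
  proof -
    have bound: "(partials ks f x)\<^sup>2 \<le> \<eta>\<^sup>2" for x
      using power_mono[OF bnd[OF ks, of x] abs_ge_zero, of 2] by simp
    have zero: "partials ks f x = 0" if "x \<notin> K" for x
      using partials_eq_0_outside_closed[OF sm compact_imp_closed[OF K] supp that] .
    have "integrable lborel (\<lambda>x. (partials ks f x)\<^sup>2)"
    proof (rule integrableI_bounded_set[OF Ks _ Kf, where B = "\<eta>\<^sup>2"])
      show "(\<lambda>x. (partials ks f x)\<^sup>2) \<in> borel_measurable lborel"
        using borel_measurable_continuous_onI[OF smooth_partials_continuous[OF sm]] by simp
    qed (use bound zero in auto)
    then have "(\<integral>x. (partials ks f x)\<^sup>2 \<partial>lborel) \<le> (\<integral>x. indicator K x * \<eta>\<^sup>2 \<partial>lborel)"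
      using Ks Kf bound zero
      by (intro integral_mono) (auto simp: less_top[symmetric] split: split_indicator)
    also have "\<dots> = \<eta>\<^sup>2 * measure lborel K"
      using Ks Kf by (simp add: measure_def less_top[symmetric])
    finally show ?thesis .
  qed
  then have "(\<Sum>ks\<in>{ks::'d list. length ks \<le> s}. \<integral>x. (partials ks f x)\<^sup>2 \<partial>lborel)
      \<le> (\<Sum>ks\<in>{ks::'d list. length ks \<le> s}. \<eta>\<^sup>2 * measure lborel K)"
    by (intro sum_mono) simp
  then have "Hs_norm s f \<le> sqrt (\<Sum>ks\<in>{ks::'d list. length ks \<le> s}. \<eta>\<^sup>2 * measure lborel K)"
    unfolding Hs_norm_def by (rule real_sqrt_le_mono)
  also have "\<dots> = sqrt (\<eta>\<^sup>2) * sqrt (real (card {ks::'d list. length ks \<le> s}) * measure lborel K)"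
    by (simp only: sum_constant real_sqrt_mult[symmetric]) (simp only: ac_simps)
  also have "\<dots> = \<eta> * sqrt (real (card {ks::'d list. length ks \<le> s}) * measure lborel K)"
    using \<eta> by simp
  finally show ?thesis .
qed

lemma test_fun_lincomb:
  assumes "test_fun \<Omega> f" "test_fun \<Omega> g"
  shows "test_fun \<Omega> (\<lambda>y. a * f y + b * g y)"
proof -
  have "{y. a * f y + b * g y \<noteq> 0} \<subseteq> {y. f y \<noteq> 0} \<union> {y. g y \<noteq> 0}" by auto
  then have "closure {y. a * f y + b * g y \<noteq> 0} \<subseteq> closure ({y. f y \<noteq> 0} \<union> {y. g y \<noteq> 0})"
    by (rule closure_mono)
  then have sub: "closure {y. a * f y + b * g y \<noteq> 0} \<subseteq> closure {y. f y \<noteq> 0} \<union> closure {y. g y \<noteq> 0}"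
    by (simp only: closure_Un)
  have "compact (closure {y. f y \<noteq> 0} \<union> closure {y. g y \<noteq> 0})"
    using assms unfolding test_fun_def by blast
  from closed_Int_compact[OF closed_closure this, of "{y. a * f y + b * g y \<noteq> 0}"] sub
  have "compact (closure {y. a * f y + b * g y \<noteq> 0})"
    by (simp only: Int_absorb2)
  moreover have "smooth (\<lambda>y. a * f y + b * g y)"
    using assms unfolding test_fun_def by (blast intro: smooth_lincomb)
  moreover have "closure {y. a * f y + b * g y \<noteq> 0} \<subseteq> \<Omega>"
    using assms sub unfolding test_fun_def by blast
  ultimately show ?thesis unfolding test_fun_def by blast
qed

lemma open_Omega_tau: "open \<Omega> \<Longrightarrow> open (Omega_tau \<Omega> \<tau>)"
proof -
  assume "open \<Omega>"
  moreover have "open {x. 4 * \<tau> < infdist x (frontier \<Omega>)}"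
    by (intro open_Collect_less continuous_intros)
  moreover have "Omega_tau \<Omega> \<tau> = \<Omega> \<inter> {x. 4 * \<tau> < infdist x (frontier \<Omega>)}"
    unfolding Omega_tau_def by auto
  ultimately show ?thesis by auto
qed

lemma Omega_tau_subset: "Omega_tau \<Omega> \<tau> \<subseteq> \<Omega>"
  unfolding Omega_tau_def by auto

lemma emeasure_Omega_tau_finite: "bounded \<Omega> \<Longrightarrow> emeasure lborel (Omega_tau \<Omega> \<tau>) < \<infinity>"
  by (rule emeasure_bounded_finite[OF bounded_subset[OF _ Omega_tau_subset]])

lemma ball_subset_if_less_infdist_frontier:
  fixes \<Omega> :: "'a::real_normed_vector set"
  assumes "z \<in> \<Omega>" "r < infdist z (frontier \<Omega>)"
  shows "ball z r \<subseteq> \<Omega>"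
proof (rule ccontr)
  assume out: "\<not> ball z r \<subseteq> \<Omega>"
  then have "r > 0" by (metis ball_eq_empty empty_subsetI not_less)
  then have "ball z r \<inter> \<Omega> \<noteq> {}" using assms(1) centre_in_ball[of z r] by blast
  with out obtain q where q: "q \<in> ball z r" "q \<in> frontier \<Omega>"
    using connected_Int_frontier[OF connected_ball, of z r \<Omega>] by blast
  then have "infdist z (frontier \<Omega>) < r" using infdist_le[OF q(2), of z] by simp
  with assms(2) show False by simp
qed

(* A closed neighbourhood of Omega_tau carrying the support of psi_tau; it is the whole space
   when Omega_tau is empty, because infdist to the empty set is 0. *)
definition cutoff_support :: "(real^'d) set \<Rightarrow> real \<Rightarrow> (real^'d) set" where
  "cutoff_support \<Omega> \<tau> = {y. infdist y (Omega_tau \<Omega> \<tau>) \<le> \<tau>}"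

lemma closed_cutoff_support: "closed (cutoff_support \<Omega> \<tau>)"
  unfolding cutoff_support_def by (intro closed_Collect_le continuous_intros)

lemma cutoff_support_subset:
  assumes "\<tau> > 0" "Omega_tau \<Omega> \<tau> \<noteq> {}"
  shows "cutoff_support \<Omega> \<tau> \<subseteq> \<Omega>"
proof
  fix y assume "y \<in> cutoff_support \<Omega> \<tau>"
  then have "infdist y (Omega_tau \<Omega> \<tau>) < 2 * \<tau>" using assms(1) by (simp add: cutoff_support_def)
  then obtain z where z: "z \<in> Omega_tau \<Omega> \<tau>" "dist y z < 2 * \<tau>"
    using assms(2) by (auto simp: infdist_notempty cINF_less_iff)
  then have "ball z (4 * \<tau>) \<subseteq> \<Omega>"
    by (intro ball_subset_if_less_infdist_frontier) (auto simp: Omega_tau_def)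
  moreover have "y \<in> ball z (4 * \<tau>)" using z(2) assms(1) by (simp add: dist_commute)
  ultimately show "y \<in> \<Omega>" by blast
qed

lemma compact_cutoff_support:
  assumes "bounded \<Omega>" "\<tau> > 0" "Omega_tau \<Omega> \<tau> \<noteq> {}"
  shows "compact (cutoff_support \<Omega> \<tau>)"
  using closed_cutoff_support bounded_subset[OF assms(1) cutoff_support_subset[OF assms(2,3)]]
  by (simp add: compact_eq_bounded_closed)

lemma test_fun_if_support_in_cutoff_support:
  assumes "bounded \<Omega>" "\<tau> > 0" "Omega_tau \<Omega> \<tau> \<noteq> {}"
    and "smooth f" "{y. f y \<noteq> 0} \<subseteq> cutoff_support \<Omega> \<tau>"
  shows "test_fun \<Omega> f"
proof -
  have sub: "closure {y. f y \<noteq> 0} \<subseteq> cutoff_support \<Omega> \<tau>"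
    using assms(5) closed_cutoff_support by (rule closure_minimal)
  then have "bounded (closure {y. f y \<noteq> 0})"
    using bounded_subset[OF compact_imp_bounded[OF compact_cutoff_support[OF assms(1-3)]]] by blast
  then have "compact (closure {y. f y \<noteq> 0})" by (simp add: compact_eq_bounded_closed)
  then show ?thesis
    unfolding test_fun_def using assms(4) sub cutoff_support_subset[OF assms(2,3)] by blast
qed

lemma mollifier_support: "mollifier \<tau> \<rho> \<Longrightarrow> {y. \<rho> y \<noteq> 0} \<subseteq> cball 0 \<tau>"
  unfolding mollifier_def by auto

lemma smooth_psi_tau:
  assumes "open \<Omega>" "bounded \<Omega>" "mollifier \<tau> \<rho>"
  shows "smooth (psi_tau \<Omega> \<tau> \<rho>)"
proof -
  have "psi_tau \<Omega> \<tau> \<rho> = (\<lambda>y. LINT z:Omega_tau \<Omega> \<tau>|lborel. \<rho> (y - z))"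
    by (simp add: psi_tau_def fun_eq_iff)
  moreover have "Omega_tau \<Omega> \<tau> \<in> sets lborel"
    using open_Omega_tau[OF assms(1)] by simp
  moreover have "smooth \<rho>" using assms(3) by (simp add: mollifier_def)
  ultimately show ?thesis
    using smooth_convolution_indicator mollifier_support[OF assms(3)]
      emeasure_Omega_tau_finite[OF assms(2)] by metis
qed

lemma psi_tau_support:
  assumes "mollifier \<tau> \<rho>"
  shows "{y. psi_tau \<Omega> \<tau> \<rho> y \<noteq> 0} \<subseteq> cutoff_support \<Omega> \<tau>"
proof
  fix y assume y: "y \<in> {y. psi_tau \<Omega> \<tau> \<rho> y \<noteq> 0}"
  obtain z where z: "z \<in> Omega_tau \<Omega> \<tau>" "\<rho> (y - z) \<noteq> 0"
  proof (rule ccontr)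
    assume "\<not> thesis"
    with that have "(\<lambda>z. indicator (Omega_tau \<Omega> \<tau>) z * \<rho> (y - z)) = (\<lambda>z. 0)"
      by (auto simp: fun_eq_iff split: split_indicator)
    with y show False by (simp add: psi_tau_def set_lebesgue_integral_def)
  qed
  then have "y - z \<in> ball 0 \<tau>" using assms unfolding mollifier_def by blast
  then have "dist y z < \<tau>" by (simp add: dist_norm norm_minus_commute)
  then show "y \<in> cutoff_support \<Omega> \<tau>"
    unfolding cutoff_support_def using infdist_le[OF z(1), of y] by simp
qed

definition R_tau_kernel :: "(real^'d) set \<Rightarrow> real \<Rightarrow> (real^'d \<Rightarrow> real) \<Rightarrow> real^'d \<Rightarrow> real^'d \<Rightarrow> real"
  where "R_tau_kernel \<Omega> \<tau> \<rho> x = (\<lambda>y. psi_tau \<Omega> \<tau> \<rho> y * \<rho> (x - y))"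

lemma R_tau_eq_kernel: "R_tau \<Omega> \<tau> \<rho> h x = h (R_tau_kernel \<Omega> \<tau> \<rho> x)"
  by (simp add: R_tau_def R_tau_kernel_def)

lemma smooth_R_tau_kernel:
  assumes "open \<Omega>" "bounded \<Omega>" "mollifier \<tau> \<rho>"
  shows "smooth (R_tau_kernel \<Omega> \<tau> \<rho> x)"
proof -
  have "smooth \<rho>" using assms(3) by (simp add: mollifier_def)
  then show ?thesis
    unfolding R_tau_kernel_def by (intro smooth_mult smooth_psi_tau[OF assms] smooth_reflect)
qed

lemma test_fun_R_tau_kernel:
  assumes "open \<Omega>" "bounded \<Omega>" "\<tau> > 0" "mollifier \<tau> \<rho>" "Omega_tau \<Omega> \<tau> \<noteq> {}"
  shows "test_fun \<Omega> (R_tau_kernel \<Omega> \<tau> \<rho> x)"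
proof (rule test_fun_if_support_in_cutoff_support[OF assms(2,3,5)])
  show "smooth (R_tau_kernel \<Omega> \<tau> \<rho> x)" using smooth_R_tau_kernel[OF assms(1,2,4)] .
  show "{y. R_tau_kernel \<Omega> \<tau> \<rho> x y \<noteq> 0} \<subseteq> cutoff_support \<Omega> \<tau>"
    using psi_tau_support[OF assms(4)] by (auto simp: R_tau_kernel_def)
qed

lemma partials_R_tau_kernel:
  assumes "open \<Omega>" "bounded \<Omega>" "mollifier \<tau> \<rho>"
  shows "partials ks (R_tau_kernel \<Omega> \<tau> \<rho> x) y =
    (\<Sum>p\<leftarrow>leibniz_splits ks. partials (fst p) (psi_tau \<Omega> \<tau> \<rho>) y
        * ((-1) ^ length (snd p) * partials (snd p) \<rho> (x - y)))"
proof -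
  have "smooth \<rho>" using assms(3) by (simp add: mollifier_def)
  then show ?thesis
    unfolding R_tau_kernel_def
    by (simp add: partials_mult[OF smooth_psi_tau[OF assms] smooth_reflect] partials_reflect)
qed

lemma abs_sum_list_le:
  fixes f g :: "'a \<Rightarrow> real"
  assumes "\<And>x. x \<in> set xs \<Longrightarrow> \<bar>f x\<bar> \<le> g x"
  shows "\<bar>\<Sum>x\<leftarrow>xs. f x\<bar> \<le> (\<Sum>x\<leftarrow>xs. g x)"
proof -
  have "\<bar>\<Sum>x\<leftarrow>xs. f x\<bar> \<le> (\<Sum>x\<leftarrow>xs. \<bar>f x\<bar>)"
    using sum_list_abs[of "map f xs"] by (simp add: o_def)
  also have "\<dots> \<le> (\<Sum>x\<leftarrow>xs. g x)" using assms by (rule sum_list_mono)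
  finally show ?thesis .
qed

lemma partials_R_tau_kernel_diff_le:
  assumes "open \<Omega>" "bounded \<Omega>" "mollifier \<tau> \<rho>" "length ks \<le> s"
    and M: "\<And>a y. length a \<le> s \<Longrightarrow> \<bar>partials a (psi_tau \<Omega> \<tau> \<rho>) y\<bar> \<le> M"
    and \<delta>: "\<And>b y. length b \<le> s \<Longrightarrow> \<bar>partials b \<rho> (x' - y) - partials b \<rho> (x - y)\<bar> \<le> \<delta>"
  shows "\<bar>partials ks (R_tau_kernel \<Omega> \<tau> \<rho> x') y - partials ks (R_tau_kernel \<Omega> \<tau> \<rho> x) y\<bar>
    \<le> 2 ^ s * (M * \<delta>)"
proof -
  have M0: "M \<ge> 0" using M[of "[]"] by force
  have \<delta>0: "\<delta> \<ge> 0" using \<delta>[of "[]"] by force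
  have "partials ks (R_tau_kernel \<Omega> \<tau> \<rho> x') y - partials ks (R_tau_kernel \<Omega> \<tau> \<rho> x) y
    = (\<Sum>p\<leftarrow>leibniz_splits ks. partials (fst p) (psi_tau \<Omega> \<tau> \<rho>) y * ((-1) ^ length (snd p)
          * (partials (snd p) \<rho> (x' - y) - partials (snd p) \<rho> (x - y))))"
    unfolding partials_R_tau_kernel[OF assms(1-3)] sum_list_subtractf[symmetric]
    by (simp add: algebra_simps)
  also have "\<bar>\<dots>\<bar> \<le> (\<Sum>p\<leftarrow>leibniz_splits ks. M * \<delta>)"
  proof (rule abs_sum_list_le)
    fix p assume "p \<in> set (leibniz_splits ks)"
    then have "length (fst p) \<le> s" "length (snd p) \<le> s"
      using leibniz_splits_length assms(4) by fastforce+
    then show "\<bar>partials (fst p) (psi_tau \<Omega> \<tau> \<rho>) y * ((-1) ^ length (snd p)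
          * (partials (snd p) \<rho> (x' - y) - partials (snd p) \<rho> (x - y)))\<bar> \<le> M * \<delta>"
      unfolding abs_mult power_abs using M \<delta> M0 by (simp add: mult_mono)
  qed
  also have "\<dots> = 2 ^ length ks * (M * \<delta>)"
    by (simp add: sum_list_triv length_leibniz_splits)
  also have "\<dots> \<le> 2 ^ s * (M * \<delta>)"
    using M0 \<delta>0 assms(4) by (intro mult_right_mono power_increasing) simp_all
  finally show ?thesis .
qed

lemma eventually_partials_translate_close:
  fixes \<rho> :: "real^'d \<Rightarrow> real"
  assumes sm: "smooth \<rho>" and supp: "{y. \<rho> y \<noteq> 0} \<subseteq> cball 0 R" and \<delta>: "\<delta> > 0"
  shows "eventually (\<lambda>x'. \<forall>b y. length b \<le> s \<longrightarrow>
    \<bar>partials b \<rho> (x' - y) - partials b \<rho> (x - y)\<bar> \<le> \<delta>) (at x)"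
proof -
  have "eventually (\<lambda>x'. \<forall>y. \<bar>partials b \<rho> (x' - y) - partials b \<rho> (x - y)\<bar> \<le> \<delta>) (at x)" for b
  proof -
    have "{y. partials b \<rho> y \<noteq> 0} \<subseteq> cball 0 R"
      using partials_eq_0_outside_closed[OF sm closed_cball supp] by blast
    then have "uniformly_continuous_on UNIV (partials b \<rho>)"
      by (rule uniformly_continuous_if_vanishing_outside_cball[OF smooth_partials_continuous[OF sm]])
    then obtain d where "d > 0" "\<And>u w. dist u w < d \<Longrightarrow> dist (partials b \<rho> u) (partials b \<rho> w) < \<delta>"
      using \<delta> unfolding uniformly_continuous_on_def by (meson UNIV_I)
    then show ?thesis
      unfolding eventually_at by (intro exI[of _ d]) (auto simp: dist_real_def dist_norm less_imp_le)
  qed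
  then have "eventually (\<lambda>x'. \<forall>b\<in>{b. length b \<le> s}. \<forall>y.
      \<bar>partials b \<rho> (x' - y) - partials b \<rho> (x - y)\<bar> \<le> \<delta>) (at x)"
    by (intro eventually_ball_finite finite_lists_length_le_UNIV) auto
  then show ?thesis by (simp add: Ball_def)
qed

lemma H_minus_diff_le:
  assumes "H_minus s \<Omega> h"
  obtains C where "C > 0"
    "\<And>f g. test_fun \<Omega> f \<Longrightarrow> test_fun \<Omega> g \<Longrightarrow> norm (h f - h g) \<le> C * Hs_norm s (\<lambda>y. f y - g y)"
proof -
  obtain C0 where C0: "\<And>f. test_fun \<Omega> f \<Longrightarrow> norm (h f) \<le> C0 * Hs_norm s f"
    using assms unfolding H_minus_def by blast
  have "norm (h f - h g) \<le> max C0 1 * Hs_norm s (\<lambda>y. f y - g y)"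
    if "test_fun \<Omega> f" "test_fun \<Omega> g" for f g
  proof -
    have "h (\<lambda>y. 1 * f y + (-1) * g y) = 1 *\<^sub>R h f + (-1) *\<^sub>R h g"
      using assms that unfolding H_minus_def by blast
    moreover have "test_fun \<Omega> (\<lambda>y. 1 * f y + (-1) * g y)"
      using test_fun_lincomb[OF that] .
    ultimately have "norm (h f - h g) \<le> C0 * Hs_norm s (\<lambda>y. f y - g y)"
      using C0 by fastforce
    also have "\<dots> \<le> max C0 1 * Hs_norm s (\<lambda>y. f y - g y)"
      by (intro mult_right_mono Hs_norm_nonneg) simp
    finally show ?thesis .
  qed
  then show thesis by (intro that[of "max C0 1"]) auto
qed

lemma bounded_partials_psi_tau:
  fixes \<Omega> :: "(real^'d) set"
  assumes "open \<Omega>" "bounded \<Omega>" "\<tau> > 0" "mollifier \<tau> \<rho>" "Omega_tau \<Omega> \<tau> \<noteq> {}"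
  obtains M where "\<And>a y. length (a::'d list) \<le> s \<Longrightarrow> \<bar>partials a (psi_tau \<Omega> \<tau> \<rho>) y\<bar> \<le> M"
proof -
  have "bounded (\<Union>a\<in>{a::'d list. length a \<le> s}. range (partials a (psi_tau \<Omega> \<tau> \<rho>)))"
  proof (intro bounded_UN ballI finite_lists_length_le_UNIV)
    fix a :: "'d list"
    have "{y. partials a (psi_tau \<Omega> \<tau> \<rho>) y \<noteq> 0} \<subseteq> cutoff_support \<Omega> \<tau>"
      using partials_eq_0_outside_closed[OF smooth_psi_tau[OF assms(1,2,4)] closed_cutoff_support
          psi_tau_support[OF assms(4)]] by blast
    then show "bounded (range (partials a (psi_tau \<Omega> \<tau> \<rho>)))"
      by (intro bounded_range_if_vanishing_outside_compact[OF
            smooth_partials_continuous[OF smooth_psi_tau[OF assms(1,2,4)]]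
            compact_cutoff_support[OF assms(2,3,5)]])
  qed
  then show thesis
    using that unfolding bounded_iff by fastforce
qed

lemma eventually_Hs_norm_R_tau_kernel_diff_le:
  fixes \<Omega> :: "(real^'d) set"
  assumes \<Omega>: "open \<Omega>" "bounded \<Omega>" and \<tau>: "\<tau> > 0" and \<rho>: "mollifier \<tau> \<rho>"
    and ne: "Omega_tau \<Omega> \<tau> \<noteq> {}" and \<eta>: "\<eta> > 0"
  shows "eventually (\<lambda>x'. Hs_norm s (\<lambda>y. R_tau_kernel \<Omega> \<tau> \<rho> x' y - R_tau_kernel \<Omega> \<tau> \<rho> x y) \<le> \<eta>)
    (at x)"
proof -
  let ?k = "R_tau_kernel \<Omega> \<tau> \<rho>"
  obtain M where M: "\<And>a y. length (a::'d list) \<le> s \<Longrightarrow> \<bar>partials a (psi_tau \<Omega> \<tau> \<rho>) y\<bar> \<le> M"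
    by (rule bounded_partials_psi_tau[OF \<Omega> \<tau> \<rho> ne, where s = s]) blast
  have M0: "M \<ge> 0" using M[of "[]"] by force
  define S where "S = sqrt (real (card {ks::'d list. length ks \<le> s}) * measure lborel (cutoff_support \<Omega> \<tau>))"
  define \<epsilon> where "\<epsilon> = \<eta> / (S + 1)"
  define \<delta> where "\<delta> = \<epsilon> / (2 ^ s * (M + 1))"
  have S: "S \<ge> 0" by (simp add: S_def)
  have \<epsilon>: "\<epsilon> > 0" "\<epsilon> * S \<le> \<eta>"
    using \<eta> S by (auto simp: \<epsilon>_def field_simps)
  have \<delta>0: "\<delta> > 0" using \<epsilon>(1) M0 by (simp add: \<delta>_def)
  have "2 ^ s * (M * \<delta>) \<le> 2 ^ s * ((M + 1) * \<delta>)" using \<delta>0 by simp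
  also have "\<dots> = \<epsilon>" using M0 by (simp add: \<delta>_def)
  finally have \<delta>: "\<delta> > 0" "2 ^ s * (M * \<delta>) \<le> \<epsilon>" using \<delta>0 by simp_all
  have "{y. \<rho> y \<noteq> 0} \<subseteq> cball 0 \<tau>" "smooth \<rho>" using \<rho> by (auto simp: mollifier_def)
  from eventually_partials_translate_close[OF this(2,1) \<delta>(1), where s = s and x = x]
  show ?thesis
  proof eventually_elim
    case (elim x')
    let ?D = "\<lambda>y. ?k x' y - ?k x y"
    note sk = smooth_R_tau_kernel[OF \<Omega> \<rho>]
    have "\<bar>partials ks ?D y\<bar> \<le> \<epsilon>" if "length ks \<le> s" for ks y
      using partials_R_tau_kernel_diff_le[OF \<Omega> \<rho> that M, where x' = x' and x = x and \<delta> = \<delta> and y = y]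
        elim \<delta>(2)
        partials_lincomb[OF sk[of x'] sk[of x], where a = 1 and b = "-1" and ks = ks]
      by simp
    moreover have "smooth ?D"
      using smooth_lincomb[OF sk[of x'] sk[of x], where a = 1 and b = "-1"] by simp
    moreover have "{y. ?D y \<noteq> 0} \<subseteq> cutoff_support \<Omega> \<tau>"
      using psi_tau_support[OF \<rho>] by (auto simp: R_tau_kernel_def)
    ultimately have "Hs_norm s ?D \<le> \<epsilon> * S"
      unfolding S_def using Hs_norm_le[OF _ compact_cutoff_support[OF \<Omega>(2) \<tau> ne]] by blast
    with \<epsilon>(2) show ?case by linarith
  qed
qed

lemma continuous_R_tau:
  fixes \<Omega> :: "(real^'d) set"
  assumes \<Omega>: "open \<Omega>" "bounded \<Omega>" and \<tau>: "\<tau> > 0" and \<rho>: "mollifier \<tau> \<rho>"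
    and h: "H_minus s \<Omega> h"
  shows "continuous_on UNIV (R_tau \<Omega> \<tau> \<rho> h)"
proof (cases "Omega_tau \<Omega> \<tau> = {}")
  case True
  then have "R_tau \<Omega> \<tau> \<rho> h = (\<lambda>x. h (\<lambda>y. 0))"
    by (simp add: R_tau_def psi_tau_def set_lebesgue_integral_def fun_eq_iff)
  then show ?thesis by simp
next
  case False
  obtain C where C: "C > 0" "\<And>f g. test_fun \<Omega> f \<Longrightarrow> test_fun \<Omega> g \<Longrightarrow>
      norm (h f - h g) \<le> C * Hs_norm s (\<lambda>y. f y - g y)"
    by (rule H_minus_diff_le[OF h]) blast
  show ?thesis
    unfolding continuous_on_eq_continuous_at[OF open_UNIV] continuous_at tendsto_iff
  proof (intro ballI allI impI)
    fix x :: "real^'d" and e :: real assume e: "e > 0"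
    then have "e / (2 * C) > 0" using C(1) by simp
    from eventually_Hs_norm_R_tau_kernel_diff_le[OF \<Omega> \<tau> \<rho> False this, where s = s and x = x]
    show "eventually (\<lambda>x'. dist (R_tau \<Omega> \<tau> \<rho> h x') (R_tau \<Omega> \<tau> \<rho> h x) < e) (at x)"
    proof eventually_elim
      case (elim x')
      have "dist (R_tau \<Omega> \<tau> \<rho> h x') (R_tau \<Omega> \<tau> \<rho> h x)
          \<le> C * Hs_norm s (\<lambda>y. R_tau_kernel \<Omega> \<tau> \<rho> x' y - R_tau_kernel \<Omega> \<tau> \<rho> x y)"
        unfolding R_tau_eq_kernel dist_norm
        by (intro C(2) test_fun_R_tau_kernel[OF \<Omega> \<tau> \<rho> False])
      also have "\<dots> \<le> C * (e / (2 * C))" using elim C(1) by (intro mult_left_mono) auto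
      also have "\<dots> < e" using e C(1) by simp
      finally show ?case .
    qed
  qed
qed

section \<open>Couplings built from a partition of unity\<close>

lemma (in pair_sigma_finite) distr_fst_density:
  assumes F[measurable]: "F \<in> borel_measurable (M1 \<Otimes>\<^sub>M M2)"
    and marginal: "AE x in M1. (\<integral>\<^sup>+y. F (x, y) \<partial>M2) = 1"
  shows "distr (density (M1 \<Otimes>\<^sub>M M2) F) M1 fst = M1"
proof (rule measure_eqI)
  fix A assume "A \<in> sets (distr (density (M1 \<Otimes>\<^sub>M M2) F) M1 fst)"
  then have A[measurable]: "A \<in> sets M1" by simp
  have "fst -` A \<inter> space (density (M1 \<Otimes>\<^sub>M M2) F) = A \<times> space M2"
    using sets.sets_into_space[OF A] by (auto simp: space_pair_measure)
  then have "emeasure (distr (density (M1 \<Otimes>\<^sub>M M2) F) M1 fst) A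
      = emeasure (density (M1 \<Otimes>\<^sub>M M2) F) (A \<times> space M2)"
    by (subst emeasure_distr) auto
  also have "\<dots> = (\<integral>\<^sup>+z. F z * indicator (A \<times> space M2) z \<partial>(M1 \<Otimes>\<^sub>M M2))"
    by (rule emeasure_density) auto
  also have "\<dots> = (\<integral>\<^sup>+x. \<integral>\<^sup>+y. F (x, y) * indicator (A \<times> space M2) (x, y) \<partial>M2 \<partial>M1)"
    by (rule M2.nn_integral_fst[symmetric]) simp
  also have "\<dots> = (\<integral>\<^sup>+x. indicator A x * (\<integral>\<^sup>+y. F (x, y) \<partial>M2) \<partial>M1)"
  proof (rule nn_integral_cong)
    fix x
    show "(\<integral>\<^sup>+y. F (x, y) * indicator (A \<times> space M2) (x, y) \<partial>M2)
        = indicator A x * (\<integral>\<^sup>+y. F (x, y) \<partial>M2)"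
      by (cases "x \<in> A") (auto intro: nn_integral_cong simp: indicator_def)
  qed
  also have "\<dots> = (\<integral>\<^sup>+x. indicator A x \<partial>M1)"
    using marginal by (intro nn_integral_cong_AE) auto
  also have "\<dots> = emeasure M1 A" by simp
  finally show "emeasure (distr (density (M1 \<Otimes>\<^sub>M M2) F) M1 fst) A = emeasure M1 A" .
qed simp

lemma (in pair_sigma_finite) distr_snd_density:
  assumes F[measurable]: "F \<in> borel_measurable (M1 \<Otimes>\<^sub>M M2)"
    and marginal: "AE y in M2. (\<integral>\<^sup>+x. F (x, y) \<partial>M1) = 1"
  shows "distr (density (M1 \<Otimes>\<^sub>M M2) F) M2 snd = M2"
proof (rule measure_eqI)
  fix A assume "A \<in> sets (distr (density (M1 \<Otimes>\<^sub>M M2) F) M2 snd)"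
  then have A[measurable]: "A \<in> sets M2" by simp
  have "snd -` A \<inter> space (density (M1 \<Otimes>\<^sub>M M2) F) = space M1 \<times> A"
    using sets.sets_into_space[OF A] by (auto simp: space_pair_measure)
  then have "emeasure (distr (density (M1 \<Otimes>\<^sub>M M2) F) M2 snd) A
      = emeasure (density (M1 \<Otimes>\<^sub>M M2) F) (space M1 \<times> A)"
    by (subst emeasure_distr) auto
  also have "\<dots> = (\<integral>\<^sup>+z. F z * indicator (space M1 \<times> A) z \<partial>(M1 \<Otimes>\<^sub>M M2))"
    by (rule emeasure_density) auto
  also have "\<dots> = (\<integral>\<^sup>+y. \<integral>\<^sup>+x. F (x, y) * indicator (space M1 \<times> A) (x, y) \<partial>M1 \<partial>M2)"
    by (rule nn_integral_snd[symmetric]) simp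
  also have "\<dots> = (\<integral>\<^sup>+y. indicator A y * (\<integral>\<^sup>+x. F (x, y) \<partial>M1) \<partial>M2)"
  proof (rule nn_integral_cong)
    fix y
    show "(\<integral>\<^sup>+x. F (x, y) * indicator (space M1 \<times> A) (x, y) \<partial>M1)
        = indicator A y * (\<integral>\<^sup>+x. F (x, y) \<partial>M1)"
      by (cases "y \<in> A") (auto intro: nn_integral_cong simp: indicator_def)
  qed
  also have "\<dots> = (\<integral>\<^sup>+y. indicator A y \<partial>M2)"
    using marginal by (intro nn_integral_cong_AE) auto
  also have "\<dots> = emeasure M2 A" by simp
  finally show "emeasure (distr (density (M1 \<Otimes>\<^sub>M M2) F) M2 snd) A = emeasure M2 A" .
qed simp

lemma density_in_couplings:
  fixes \<mu> \<nu> :: "'a::metric_space measure"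
  assumes "pair_sigma_finite \<mu> \<nu>" "sets \<mu> = sets borel" "sets \<nu> = sets borel"
    and "F \<in> borel_measurable (\<mu> \<Otimes>\<^sub>M \<nu>)"
    and "AE x in \<mu>. (\<integral>\<^sup>+y. F (x, y) \<partial>\<nu>) = 1" "AE y in \<nu>. (\<integral>\<^sup>+x. F (x, y) \<partial>\<mu>) = 1"
  shows "density (\<mu> \<Otimes>\<^sub>M \<nu>) F \<in> couplings \<mu> \<nu>"
proof -
  interpret pair_sigma_finite \<mu> \<nu> by fact
  have "distr (density (\<mu> \<Otimes>\<^sub>M \<nu>) F) borel fst = distr (density (\<mu> \<Otimes>\<^sub>M \<nu>) F) \<mu> fst"
    by (rule distr_cong[OF refl]) (simp_all add: assms(2))
  moreover have "distr (density (\<mu> \<Otimes>\<^sub>M \<nu>) F) borel snd = distr (density (\<mu> \<Otimes>\<^sub>M \<nu>) F) \<nu> snd"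
    by (rule distr_cong[OF refl]) (simp_all add: assms(3))
  moreover have "sets (density (\<mu> \<Otimes>\<^sub>M \<nu>) F) = sets (borel \<Otimes>\<^sub>M borel)"
    using sets_pair_measure_cong[OF assms(2,3)] by simp
  ultimately show ?thesis
    unfolding couplings_def
    using distr_fst_density[OF assms(4,5)] distr_snd_density[OF assms(4,6)] by (simp only: mem_Collect_eq)
qed

lemma integrable_if_bounded_borel:
  fixes f :: "'a::topological_space \<Rightarrow> real"
  assumes "finite_measure M" "sets M = sets borel" "f \<in> borel_measurable borel" "\<And>x. \<bar>f x\<bar> \<le> B"
  shows "integrable M f"
  using assms measurable_cong_sets[OF assms(2) refl]
  by (intro finite_measure.integrable_const_bound[where B = B]) auto

(* The mass shared k that the cell theta k carries in both measures is coupled inside the cell,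
   the unmatched remainders are coupled independently. Divisions by zero are harmless: a cell of
   zero mass has shared k = 0, and a zero residual forces the remainders to vanish a.e. *)
locale partition_coupling = pair_prob_space \<mu> \<nu>
  for \<mu> \<nu> :: "'a::{metric_space, second_countable_topology} measure" +
  fixes I :: "'i set" and \<theta> :: "'i \<Rightarrow> 'a \<Rightarrow> real"
  assumes sets_\<mu> [measurable_cong]: "sets \<mu> = sets borel"
    and sets_\<nu> [measurable_cong]: "sets \<nu> = sets borel"
    and finite_I: "finite I"
    and \<theta>_measurable [measurable]: "\<And>k. k \<in> I \<Longrightarrow> \<theta> k \<in> borel_measurable borel"
    and \<theta>_nonneg: "\<And>k z. k \<in> I \<Longrightarrow> 0 \<le> \<theta> k z"
    and \<theta>_sum_le_1: "\<And>z. (\<Sum>k\<in>I. \<theta> k z) \<le> 1"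
begin

definition mass :: "'a measure \<Rightarrow> 'i \<Rightarrow> real" where
  "mass M k = (\<integral>z. \<theta> k z \<partial>M)"

definition shared :: "'i \<Rightarrow> real" where
  "shared k = min (mass \<mu> k) (mass \<nu> k)"

definition matched :: "'a measure \<Rightarrow> 'a \<Rightarrow> real" where
  "matched M z = (\<Sum>k\<in>I. \<theta> k z * (shared k / mass M k))"

definition residual :: real where
  "residual = 1 - (\<Sum>k\<in>I. shared k)"

definition cell_density :: "'a \<times> 'a \<Rightarrow> real" where
  "cell_density x = (\<Sum>k\<in>I. \<theta> k (fst x) * \<theta> k (snd x) * (shared k / (mass \<mu> k * mass \<nu> k)))"

definition residual_density :: "'a \<times> 'a \<Rightarrow> real" where
  "residual_density x = (1 - matched \<mu> (fst x)) * (1 - matched \<nu> (snd x)) / residual"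

definition coupling :: "('a \<times> 'a) measure" where
  "coupling = density (\<mu> \<Otimes>\<^sub>M \<nu>) (\<lambda>x. ennreal (cell_density x + residual_density x))"

lemma \<theta>_le_1: "k \<in> I \<Longrightarrow> \<theta> k z \<le> 1"
  using member_le_sum[of k I "\<lambda>k. \<theta> k z"] \<theta>_nonneg finite_I \<theta>_sum_le_1[of z] by force

lemma prob_space_marginal: "M \<in> {\<mu>, \<nu>} \<Longrightarrow> prob_space M"
  using M1.prob_space_axioms M2.prob_space_axioms by auto

lemma sets_marginal: "M \<in> {\<mu>, \<nu>} \<Longrightarrow> sets M = sets borel"
  using sets_\<mu> sets_\<nu> by auto

lemma integrable_marginal:
  fixes f :: "'a \<Rightarrow> real"
  assumes "M \<in> {\<mu>, \<nu>}" "f \<in> borel_measurable borel" "\<And>x. \<bar>f x\<bar> \<le> B"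
  shows "integrable M f"
proof -
  interpret prob_space M using prob_space_marginal[OF assms(1)] .
  show ?thesis
    using finite_measure_axioms sets_marginal[OF assms(1)] assms(2,3)
    by (rule integrable_if_bounded_borel)
qed

lemma integrable_\<theta>: "M \<in> {\<mu>, \<nu>} \<Longrightarrow> k \<in> I \<Longrightarrow> integrable M (\<theta> k)"
  using \<theta>_nonneg \<theta>_le_1 by (intro integrable_marginal[where B = 1]) auto

lemma mass_nonneg: "k \<in> I \<Longrightarrow> 0 \<le> mass M k"
  unfolding mass_def using \<theta>_nonneg by (simp add: Bochner_Integration.integral_nonneg)

lemma shared_nonneg: "k \<in> I \<Longrightarrow> 0 \<le> shared k"
  using mass_nonneg by (simp add: shared_def)

lemma shared_le_mass: "M \<in> {\<mu>, \<nu>} \<Longrightarrow> shared k \<le> mass M k"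
  by (auto simp: shared_def)

lemma shared_div_mass:
  assumes "M \<in> {\<mu>, \<nu>}" "k \<in> I"
  shows "0 \<le> shared k / mass M k" "shared k / mass M k \<le> 1"
    "mass M k * (shared k / mass M k) = shared k"
proof -
  have "0 \<le> shared k" "shared k \<le> mass M k"
    using shared_nonneg[OF assms(2)] shared_le_mass[OF assms(1)] .
  then show "0 \<le> shared k / mass M k" "shared k / mass M k \<le> 1"
    "mass M k * (shared k / mass M k) = shared k"
    by (cases "mass M k = 0"; simp)+
qed

lemma matched_measurable [measurable]: "matched M \<in> borel_measurable borel"
  unfolding matched_def by measurable

lemma matched_nonneg: "M \<in> {\<mu>, \<nu>} \<Longrightarrow> 0 \<le> matched M z"
  unfolding matched_def using \<theta>_nonneg shared_div_mass by (intro sum_nonneg mult_nonneg_nonneg) auto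

lemma matched_le_1: "M \<in> {\<mu>, \<nu>} \<Longrightarrow> matched M z \<le> 1"
proof -
  assume M: "M \<in> {\<mu>, \<nu>}"
  have "matched M z \<le> (\<Sum>k\<in>I. \<theta> k z)"
    unfolding matched_def using shared_div_mass[OF M] \<theta>_nonneg
    by (intro sum_mono mult_left_le) auto
  then show ?thesis using \<theta>_sum_le_1[of z] by linarith
qed

lemma integrable_matched: "M \<in> {\<mu>, \<nu>} \<Longrightarrow> integrable M (matched M)"
  using matched_nonneg matched_le_1 by (intro integrable_marginal[where B = 1]) auto

lemma integral_matched: "M \<in> {\<mu>, \<nu>} \<Longrightarrow> (\<integral>z. matched M z \<partial>M) = (\<Sum>k\<in>I. shared k)"
  unfolding matched_def using integrable_\<theta> shared_div_mass
  by (simp add: Bochner_Integration.integral_sum mass_def[symmetric] mult.commute)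

lemma integral_unmatched:
  assumes "M \<in> {\<mu>, \<nu>}"
  shows "(\<integral>z. 1 - matched M z \<partial>M) = residual"
proof -
  interpret prob_space M using prob_space_marginal[OF assms] .
  show ?thesis
    using integrable_matched[OF assms] integral_matched[OF assms] by (simp add: residual_def prob_space)
qed

lemma residual_nonneg: "0 \<le> residual"
proof -
  have "0 \<le> (\<integral>z. 1 - matched \<mu> z \<partial>\<mu>)"
    using matched_le_1[of \<mu>] by (intro Bochner_Integration.integral_nonneg) simp
  then show ?thesis using integral_unmatched[of \<mu>] by simp
qed

lemma AE_matched_eq_1:
  assumes "M \<in> {\<mu>, \<nu>}" "residual = 0"
  shows "AE z in M. matched M z = 1"
proof -
  interpret prob_space M using prob_space_marginal[OF assms(1)] .
  have "integrable M (\<lambda>z. 1 - matched M z)"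
    using integrable_matched[OF assms(1)] by simp
  then have "AE z in M. 1 - matched M z = 0"
    using integral_nonneg_eq_0_iff_AE[of M "\<lambda>z. 1 - matched M z"] integral_unmatched[OF assms(1)]
      assms(2) matched_le_1[OF assms(1)] by auto
  then show ?thesis by auto
qed

lemma sets_pair: "sets (\<mu> \<Otimes>\<^sub>M \<nu>) = sets borel"
  using sets_pair_measure_cong[OF sets_\<mu> sets_\<nu>] unfolding borel_prod .

lemma integrable_pair:
  fixes f :: "'a \<times> 'a \<Rightarrow> real"
  shows "f \<in> borel_measurable borel \<Longrightarrow> (\<And>x. \<bar>f x\<bar> \<le> B) \<Longrightarrow> integrable (\<mu> \<Otimes>\<^sub>M \<nu>) f"
  using integrable_if_bounded_borel[OF P.finite_measure_axioms sets_pair] by blast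

lemma shared_div_masses:
  assumes "k \<in> I"
  shows "shared k / (mass \<mu> k * mass \<nu> k) * mass \<nu> k = shared k / mass \<mu> k"
    "shared k / (mass \<mu> k * mass \<nu> k) * mass \<mu> k = shared k / mass \<nu> k"
proof -
  have "0 \<le> shared k" "shared k \<le> mass \<mu> k" "shared k \<le> mass \<nu> k"
    using shared_nonneg[OF assms] shared_le_mass[of \<mu>] shared_le_mass[of \<nu>] by auto
  then show "shared k / (mass \<mu> k * mass \<nu> k) * mass \<nu> k = shared k / mass \<mu> k"
    "shared k / (mass \<mu> k * mass \<nu> k) * mass \<mu> k = shared k / mass \<nu> k"
    by (cases "mass \<mu> k = 0"; cases "mass \<nu> k = 0"; simp)+
qed

lemma cell_density_measurable [measurable]: "cell_density \<in> borel_measurable (borel \<Otimes>\<^sub>M borel)"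
  unfolding cell_density_def by measurable

lemma residual_density_measurable [measurable]:
  "residual_density \<in> borel_measurable (borel \<Otimes>\<^sub>M borel)"
  unfolding residual_density_def by measurable

lemma cell_density_nonneg: "0 \<le> cell_density x"
  unfolding cell_density_def using \<theta>_nonneg shared_nonneg mass_nonneg
  by (intro sum_nonneg mult_nonneg_nonneg divide_nonneg_nonneg) auto

lemma residual_density_nonneg: "0 \<le> residual_density x"
  unfolding residual_density_def using matched_le_1 residual_nonneg
  by (intro mult_nonneg_nonneg divide_nonneg_nonneg) auto

lemma cell_density_le: "cell_density x \<le> (\<Sum>k\<in>I. shared k / (mass \<mu> k * mass \<nu> k))"
  unfolding cell_density_def using \<theta>_nonneg \<theta>_le_1 shared_nonneg mass_nonneg
  by (intro sum_mono mult_left_le_one_le mult_le_one mult_nonneg_nonneg divide_nonneg_nonneg) auto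

lemma residual_density_le: "residual_density x \<le> 1 / residual"
  unfolding residual_density_def using matched_nonneg matched_le_1 residual_nonneg
  by (intro divide_right_mono mult_le_one) auto

lemma integral_cell_density_snd: "(\<integral>w. cell_density (z, w) \<partial>\<nu>) = matched \<mu> z"
proof -
  have "(\<integral>w. cell_density (z, w) \<partial>\<nu>)
      = (\<Sum>k\<in>I. \<integral>w. \<theta> k z * \<theta> k w * (shared k / (mass \<mu> k * mass \<nu> k)) \<partial>\<nu>)"
    unfolding cell_density_def fst_conv snd_conv using integrable_\<theta>[of \<nu>]
    by (intro Bochner_Integration.integral_sum) auto
  also have "\<dots> = (\<Sum>k\<in>I. \<theta> k z * mass \<nu> k * (shared k / (mass \<mu> k * mass \<nu> k)))"
    by (simp only: integral_mult_left_zero integral_mult_right_zero mass_def)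
  also have "\<dots> = matched \<mu> z"
    unfolding matched_def
    by (intro sum.cong refl) (metis shared_div_masses(1) mult.assoc mult.commute)
  finally show ?thesis .
qed

lemma integral_cell_density_fst: "(\<integral>z. cell_density (z, w) \<partial>\<mu>) = matched \<nu> w"
proof -
  have "(\<integral>z. cell_density (z, w) \<partial>\<mu>)
      = (\<Sum>k\<in>I. \<integral>z. \<theta> k z * \<theta> k w * (shared k / (mass \<mu> k * mass \<nu> k)) \<partial>\<mu>)"
    unfolding cell_density_def fst_conv snd_conv using integrable_\<theta>[of \<mu>]
    by (intro Bochner_Integration.integral_sum) auto
  also have "\<dots> = (\<Sum>k\<in>I. mass \<mu> k * \<theta> k w * (shared k / (mass \<mu> k * mass \<nu> k)))"
    by (simp only: integral_mult_left_zero integral_mult_right_zero mass_def)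
  also have "\<dots> = matched \<nu> w"
    unfolding matched_def
    by (intro sum.cong refl) (metis shared_div_masses(2) mult.assoc mult.commute)
  finally show ?thesis .
qed

lemma integral_residual_density_snd:
  "(\<integral>w. residual_density (z, w) \<partial>\<nu>) = (1 - matched \<mu> z) * (residual / residual)"
  using integral_unmatched[of \<nu>] by (simp add: residual_density_def)

lemma integral_residual_density_fst:
  "(\<integral>z. residual_density (z, w) \<partial>\<mu>) = (1 - matched \<nu> w) * (residual / residual)"
  using integral_unmatched[of \<mu>] by (simp add: residual_density_def mult.commute)

lemma integrable_cell_density_snd: "integrable \<nu> (\<lambda>w. cell_density (z, w))"
  using cell_density_nonneg cell_density_le
  by (intro integrable_marginal[where B = "\<Sum>k\<in>I. shared k / (mass \<mu> k * mass \<nu> k)"]) auto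

lemma integrable_cell_density_fst: "integrable \<mu> (\<lambda>z. cell_density (z, w))"
  using cell_density_nonneg cell_density_le
  by (intro integrable_marginal[where B = "\<Sum>k\<in>I. shared k / (mass \<mu> k * mass \<nu> k)"]) auto

lemma integrable_residual_density_snd: "integrable \<nu> (\<lambda>w. residual_density (z, w))"
  using residual_density_nonneg residual_density_le
  by (intro integrable_marginal[where B = "1 / residual"]) auto

lemma integrable_residual_density_fst: "integrable \<mu> (\<lambda>z. residual_density (z, w))"
  using residual_density_nonneg residual_density_le
  by (intro integrable_marginal[where B = "1 / residual"]) auto

lemma matched_plus_unmatched_AE_eq_1:
  assumes "M \<in> {\<mu>, \<nu>}"
  shows "AE z in M. matched M z + (1 - matched M z) * (residual / residual) = 1"
proof (cases "residual = 0")
  case True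
  from AE_matched_eq_1[OF assms True] show ?thesis by eventually_elim simp
qed simp

lemma AE_coupling_marginal_fst:
  "AE z in \<mu>. (\<integral>\<^sup>+w. ennreal (cell_density (z, w) + residual_density (z, w)) \<partial>\<nu>) = 1"
proof -
  from matched_plus_unmatched_AE_eq_1[of \<mu>]
  have "AE z in \<mu>. matched \<mu> z + (1 - matched \<mu> z) * (residual / residual) = 1" by simp
  then show ?thesis
  proof eventually_elim
    case (elim z)
    have "(\<integral>\<^sup>+w. ennreal (cell_density (z, w) + residual_density (z, w)) \<partial>\<nu>)
        = ennreal (\<integral>w. cell_density (z, w) + residual_density (z, w) \<partial>\<nu>)"
      using integrable_cell_density_snd integrable_residual_density_snd
        cell_density_nonneg residual_density_nonneg
      by (intro nn_integral_eq_integral) (auto intro: add_nonneg_nonneg)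
    also have "\<dots> = 1"
      using integrable_cell_density_snd integrable_residual_density_snd elim
      by (simp add: integral_cell_density_snd integral_residual_density_snd)
    finally show ?case .
  qed
qed

lemma AE_coupling_marginal_snd:
  "AE w in \<nu>. (\<integral>\<^sup>+z. ennreal (cell_density (z, w) + residual_density (z, w)) \<partial>\<mu>) = 1"
proof -
  from matched_plus_unmatched_AE_eq_1[of \<nu>]
  have "AE w in \<nu>. matched \<nu> w + (1 - matched \<nu> w) * (residual / residual) = 1" by simp
  then show ?thesis
  proof eventually_elim
    case (elim w)
    have "(\<integral>\<^sup>+z. ennreal (cell_density (z, w) + residual_density (z, w)) \<partial>\<mu>)
        = ennreal (\<integral>z. cell_density (z, w) + residual_density (z, w) \<partial>\<mu>)"
      using integrable_cell_density_fst integrable_residual_density_fst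
        cell_density_nonneg residual_density_nonneg
      by (intro nn_integral_eq_integral) (auto intro: add_nonneg_nonneg)
    also have "\<dots> = 1"
      using integrable_cell_density_fst integrable_residual_density_fst elim
      by (simp add: integral_cell_density_fst integral_residual_density_fst)
    finally show ?case .
  qed
qed

lemma coupling_in_couplings: "coupling \<in> couplings \<mu> \<nu>"
  unfolding coupling_def
  using pair_sigma_finite_axioms sets_\<mu> sets_\<nu> _ AE_coupling_marginal_fst AE_coupling_marginal_snd
  by (rule density_in_couplings) measurable

lemma residual_le_mass_diff:
  assumes "AE w in \<nu>. (\<Sum>k\<in>I. \<theta> k w) = 1"
  shows "residual \<le> (\<Sum>k\<in>I. \<bar>mass \<nu> k - mass \<mu> k\<bar>)"
proof -
  have "(\<Sum>k\<in>I. mass \<nu> k) = (\<integral>w. (\<Sum>k\<in>I. \<theta> k w) \<partial>\<nu>)"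
    unfolding mass_def using integrable_\<theta>[of \<nu>]
    by (intro Bochner_Integration.integral_sum[symmetric]) auto
  also have "\<dots> = (\<integral>w. 1 \<partial>\<nu>)" by (rule integral_cong_AE[OF _ _ assms]) measurable
  finally have "(\<Sum>k\<in>I. mass \<nu> k) = 1" by (simp add: M2.prob_space)
  then have "residual = (\<Sum>k\<in>I. mass \<nu> k - shared k)"
    by (simp add: residual_def sum_subtractf)
  also have "\<dots> \<le> (\<Sum>k\<in>I. \<bar>mass \<nu> k - mass \<mu> k\<bar>)"
    by (intro sum_mono) (auto simp: shared_def)
  finally show ?thesis .
qed

lemma cost_density_le:
  assumes p: "0 < p"
    and cells: "\<And>k z w. k \<in> I \<Longrightarrow> 0 < \<theta> k z \<Longrightarrow> 0 < \<theta> k w \<Longrightarrow> dist z w \<le> \<delta>"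
    and D: "dist z w \<le> D"
  shows "(cell_density (z, w) + residual_density (z, w)) * dist z w powr p
    \<le> \<delta> powr p * cell_density (z, w) + D powr p * residual_density (z, w)"
proof -
  define C where "C k = shared k / (mass \<mu> k * mass \<nu> k)" for k
  have "\<theta> k z * \<theta> k w * C k * dist z w powr p \<le> \<delta> powr p * (\<theta> k z * \<theta> k w * C k)"
    if k: "k \<in> I" for k
  proof (cases "0 < \<theta> k z \<and> 0 < \<theta> k w")
    case True
    then have "dist z w powr p \<le> \<delta> powr p" using cells[OF k] p by (intro powr_mono2) auto
    moreover have "0 \<le> \<theta> k z * \<theta> k w * C k"
      using \<theta>_nonneg[OF k] shared_nonneg[OF k] mass_nonneg[OF k] by (simp add: C_def)
    ultimately show ?thesis by (metis mult_right_mono mult.commute)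
  next
    case False
    then have "\<theta> k z = 0 \<or> \<theta> k w = 0" using \<theta>_nonneg[OF k] by (auto simp: less_le)
    then show ?thesis by auto
  qed
  then have "cell_density (z, w) * dist z w powr p \<le> \<delta> powr p * cell_density (z, w)"
    unfolding cell_density_def C_def[symmetric] fst_conv snd_conv sum_distrib_left sum_distrib_right
    by (rule sum_mono)
  moreover have "residual_density (z, w) * dist z w powr p \<le> D powr p * residual_density (z, w)"
    using mult_right_mono[OF powr_mono2[of p "dist z w" D] residual_density_nonneg[of "(z, w)"]] D p
    by (simp add: mult.commute)
  ultimately show ?thesis by (simp add: distrib_right)
qed

lemma integrable_density_combination:
  "integrable (\<mu> \<Otimes>\<^sub>M \<nu>) (\<lambda>x. a * cell_density x + b * residual_density x)"
proof -
  have "\<bar>a * cell_density x + b * residual_density x\<bar>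
      \<le> \<bar>a\<bar> * (\<Sum>k\<in>I. shared k / (mass \<mu> k * mass \<nu> k)) + \<bar>b\<bar> * (1 / residual)" for x
  proof (rule order.trans[OF abs_triangle_ineq add_mono])
    show "\<bar>a * cell_density x\<bar> \<le> \<bar>a\<bar> * (\<Sum>k\<in>I. shared k / (mass \<mu> k * mass \<nu> k))"
      unfolding abs_mult using cell_density_nonneg[of x] cell_density_le[of x]
      by (intro mult_left_mono) auto
    show "\<bar>b * residual_density x\<bar> \<le> \<bar>b\<bar> * (1 / residual)"
      unfolding abs_mult using residual_density_nonneg[of x] residual_density_le[of x]
      by (intro mult_left_mono) auto
  qed
  then show ?thesis
    by (intro integrable_pair) (auto simp: borel_prod[symmetric])
qed

lemma integral_cost_density_le:
  assumes a: "0 \<le> a" and b: "0 \<le> b" and cover: "AE w in \<nu>. (\<Sum>k\<in>I. \<theta> k w) = 1"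
  shows "(\<integral>x. a * cell_density x + b * residual_density x \<partial>(\<mu> \<Otimes>\<^sub>M \<nu>))
    \<le> a + b * (\<Sum>k\<in>I. \<bar>mass \<nu> k - mass \<mu> k\<bar>)"
proof -
  from integrable_density_combination[of a b]
  have "(\<integral>x. a * cell_density x + b * residual_density x \<partial>(\<mu> \<Otimes>\<^sub>M \<nu>))
      = (\<integral>z. (\<integral>w. a * cell_density (z, w) + b * residual_density (z, w) \<partial>\<nu>) \<partial>\<mu>)"
    by (rule integral_fst'[symmetric])
  also have "\<dots> = (\<integral>z. a * matched \<mu> z + b * ((1 - matched \<mu> z) * (residual / residual)) \<partial>\<mu>)"
    using integrable_cell_density_snd integrable_residual_density_snd
    by (simp add: integral_cell_density_snd integral_residual_density_snd)
  also have "\<dots> = a * (\<Sum>k\<in>I. shared k) + b * (residual * (residual / residual))"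
    using integrable_matched[of \<mu>] integral_matched[of \<mu>] integral_unmatched[of \<mu>]
    by (simp add: integral_mult_left_zero)
  also have "\<dots> \<le> a + b * (\<Sum>k\<in>I. \<bar>mass \<nu> k - mass \<mu> k\<bar>)"
  proof (rule add_mono)
    have "(\<Sum>k\<in>I. shared k) \<le> 1" using residual_nonneg by (simp add: residual_def)
    then show "a * (\<Sum>k\<in>I. shared k) \<le> a" using a by (simp add: mult_left_le)
    have "residual * (residual / residual) \<le> residual" by (cases "residual = 0") auto
    then have "residual * (residual / residual) \<le> (\<Sum>k\<in>I. \<bar>mass \<nu> k - mass \<mu> k\<bar>)"
      using residual_le_mass_diff[OF cover] by linarith
    then show "b * (residual * (residual / residual)) \<le> b * (\<Sum>k\<in>I. \<bar>mass \<nu> k - mass \<mu> k\<bar>)"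
      using b by (rule mult_left_mono)
  qed
  finally show ?thesis .
qed

lemma AE_cost_density_le:
  assumes p: "0 < p"
    and cells: "\<And>k z w. k \<in> I \<Longrightarrow> 0 < \<theta> k z \<Longrightarrow> 0 < \<theta> k w \<Longrightarrow> dist z w \<le> \<delta>"
    and S_\<mu>: "AE z in \<mu>. z \<in> S" and S_\<nu>: "AE w in \<nu>. w \<in> S"
    and S_diam: "\<And>z w. z \<in> S \<Longrightarrow> w \<in> S \<Longrightarrow> dist z w \<le> D"
    and S [measurable]: "S \<in> sets borel"
  shows "AE x in \<mu> \<Otimes>\<^sub>M \<nu>. ennreal (cell_density x + residual_density x)
      * ennreal (dist (fst x) (snd x) powr p)
    \<le> ennreal (\<delta> powr p * cell_density x + D powr p * residual_density x)"
proof -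
  have "AE x in \<mu> \<Otimes>\<^sub>M \<nu>. fst x \<in> S \<and> snd x \<in> S"
    using S_\<mu> by (intro AE_pair_measure) (auto intro: AE_mp[OF S_\<nu>])
  then show ?thesis
  proof eventually_elim
    case (elim x)
    then have "dist (fst x) (snd x) \<le> D" using S_diam by blast
    from cost_density_le[OF p _ this] cells
    have "(cell_density x + residual_density x) * dist (fst x) (snd x) powr p
        \<le> \<delta> powr p * cell_density x + D powr p * residual_density x"
      by simp
    then show ?case
      using cell_density_nonneg[of x] residual_density_nonneg[of x]
      by (subst ennreal_mult[symmetric]) (auto intro: ennreal_leI simp del: ennreal_plus)
  qed
qed

theorem transport_cost_le:
  assumes p: "0 < p"
    and cells: "\<And>k z w. k \<in> I \<Longrightarrow> 0 < \<theta> k z \<Longrightarrow> 0 < \<theta> k w \<Longrightarrow> dist z w \<le> \<delta>"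
    and S: "S \<in> sets borel" "AE z in \<mu>. z \<in> S" "AE w in \<nu>. w \<in> S"
    and S_diam: "\<And>z w. z \<in> S \<Longrightarrow> w \<in> S \<Longrightarrow> dist z w \<le> D"
    and cover: "AE w in \<nu>. (\<Sum>k\<in>I. \<theta> k w) = 1"
  shows "transport_cost p \<mu> \<nu> \<le> ennreal (\<delta> powr p + D powr p * (\<Sum>k\<in>I. \<bar>mass \<nu> k - mass \<mu> k\<bar>))"
proof -
  let ?G = "\<lambda>x. \<delta> powr p * cell_density x + D powr p * residual_density x"
  have "transport_cost p \<mu> \<nu> \<le> (\<integral>\<^sup>+x. ennreal (dist (fst x) (snd x) powr p) \<partial>coupling)"
    unfolding transport_cost_def by (rule INF_lower[OF coupling_in_couplings])
  also have "\<dots> = (\<integral>\<^sup>+x. ennreal (cell_density x + residual_density x)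
      * ennreal (dist (fst x) (snd x) powr p) \<partial>(\<mu> \<Otimes>\<^sub>M \<nu>))"
    unfolding coupling_def by (rule nn_integral_density) measurable
  also have "\<dots> \<le> (\<integral>\<^sup>+x. ennreal (?G x) \<partial>(\<mu> \<Otimes>\<^sub>M \<nu>))"
    using AE_cost_density_le[OF p cells S(2,3) S_diam S(1)] by (rule nn_integral_mono_AE)
  also have "\<dots> = ennreal (\<integral>x. ?G x \<partial>(\<mu> \<Otimes>\<^sub>M \<nu>))"
    using integrable_density_combination cell_density_nonneg residual_density_nonneg
    by (intro nn_integral_eq_integral) auto
  also have "\<dots> \<le> ennreal (\<delta> powr p + D powr p * (\<Sum>k\<in>I. \<bar>mass \<nu> k - mass \<mu> k\<bar>))"
    using integral_cost_density_le[OF _ _ cover] by (intro ennreal_leI) simp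
  finally show ?thesis .
qed

end

definition ball_pou :: "'a::metric_space set \<Rightarrow> real \<Rightarrow> 'a \<Rightarrow> 'a \<Rightarrow> real" where
  "ball_pou C r c z = max 0 (r - dist z c) / (\<Sum>c'\<in>C. max 0 (r - dist z c'))"

lemma ball_pou_nonneg: "0 \<le> ball_pou C r c z"
  unfolding ball_pou_def by (intro divide_nonneg_nonneg sum_nonneg) auto

lemma sum_ball_pou:
  assumes "finite C"
  shows "(\<Sum>c\<in>C. ball_pou C r c z) = (if z \<in> (\<Union>c\<in>C. ball c r) then 1 else 0)"
proof -
  have "(\<Sum>c'\<in>C. max 0 (r - dist z c')) = 0 \<longleftrightarrow> z \<notin> (\<Union>c\<in>C. ball c r)"
    using assms by (subst sum_nonneg_eq_0_iff) (auto simp: dist_commute)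
  then show ?thesis
    unfolding ball_pou_def by (simp add: sum_divide_distrib[symmetric])
qed

lemma ball_pou_pos_imp_dist: "0 < ball_pou C r c z \<Longrightarrow> dist z c < r"
  unfolding ball_pou_def by (cases "dist z c < r") auto

lemma ball_pou_measurable [measurable]: "ball_pou C r c \<in> borel_measurable borel"
  unfolding ball_pou_def
  by (intro borel_measurable_divide borel_measurable_continuous_onI continuous_intros)

lemma continuous_on_ball_pou:
  assumes "finite C" "continuous_on A f" "f ` A \<subseteq> (\<Union>c\<in>C. ball c r)"
  shows "continuous_on A (\<lambda>x. ball_pou C r c (f x))"
  unfolding ball_pou_def
proof (intro continuous_on_divide continuous_intros assms(2) ballI)
  fix x assume "x \<in> A"
  then obtain c where "c \<in> C" "dist (f x) c < r" using assms(3) by (force simp: dist_commute)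
  then show "(\<Sum>c'\<in>C. max 0 (r - dist (f x) c')) \<noteq> 0"
    using assms(1) by (subst sum_nonneg_eq_0_iff) (auto intro!: bexI[of _ c])
qed

section \<open>Empirical and graph measures\<close>

lemma integral_uniform_measure:
  fixes f :: "'a \<Rightarrow> real"
  assumes "A \<in> sets M" "0 < emeasure M A" "emeasure M A < \<infinity>" "f \<in> borel_measurable M"
  shows "(\<integral>x. f x \<partial>uniform_measure M A) = (LINT x:A|M. f x) / measure M A"
proof -
  have m: "0 < measure M A" using assms(2,3) by (simp add: emeasure_eq_ennreal_measure)
  have "indicator A x / emeasure M A = ennreal (indicator A x / measure M A)" for x
    using assms(3) divide_ennreal[of 1 "measure M A"] m
    by (cases "x \<in> A") (simp_all add: emeasure_eq_ennreal_measure less_top)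
  then have "uniform_measure M A = density M (\<lambda>x. ennreal (indicator A x / measure M A))"
    by (simp add: uniform_measure_def)
  then have "(\<integral>x. f x \<partial>uniform_measure M A) = (\<integral>x. indicator A x / measure M A * f x \<partial>M)"
    using assms(1,4) by (simp add: integral_density)
  also have "\<dots> = (LINT x:A|M. f x) / measure M A"
    by (simp add: set_lebesgue_integral_def)
  finally show ?thesis .
qed

lemma empirical_point_measurable:
  "(\<lambda>j. (xs j, g (xs j))) \<in> measurable (uniform_measure (count_space UNIV) {1..N}) borel"
  by (simp add: measurable_cong_sets[OF sets_uniform_measure refl])

lemma sets_empirical: "sets (empirical N xs g) = sets borel"
  by (simp add: empirical_def)

lemma prob_space_empirical: "N \<ge> 1 \<Longrightarrow> prob_space (empirical N xs g)"
  unfolding empirical_def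
  by (intro prob_space.prob_space_distr[OF _ empirical_point_measurable] prob_space_uniform_measure)
    auto

lemma AE_empirical:
  assumes "\<And>j. j \<in> {1..N} \<Longrightarrow> P (xs j, g (xs j))" "{z. P z} \<in> sets borel"
  shows "AE z in empirical N xs g. P z"
  unfolding empirical_def using assms
  by (subst AE_distr_iff[OF empirical_point_measurable]) (auto intro!: AE_uniform_measureI)

lemma integral_empirical:
  fixes f :: "(real^'d) \<times> (real^'n) \<Rightarrow> real"
  assumes "N \<ge> 1" "f \<in> borel_measurable borel"
  shows "(\<integral>z. f z \<partial>empirical N xs g) = (\<Sum>j=1..N. f (xs j, g (xs j))) / real N"
proof -
  have "(\<integral>z. f z \<partial>empirical N xs g)
      = (\<integral>j. f (xs j, g (xs j)) \<partial>uniform_measure (count_space UNIV) {1..N})"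
    unfolding empirical_def using assms(2) by (rule integral_distr[OF empirical_point_measurable])
  also have "\<dots> = (LINT j:{1..N}|count_space UNIV. f (xs j, g (xs j))) / real N"
    using assms(1) by (subst integral_uniform_measure) (auto simp: of_nat_less_top)
  also have "(LINT j:{1..N}|count_space UNIV. f (xs j, g (xs j))) = (\<Sum>j=1..N. f (xs j, g (xs j)))"
    using integral_indicator_finite_real[of "{1..N}" "count_space UNIV" "\<lambda>j. f (xs j, g (xs j))"]
    by (simp add: set_lebesgue_integral_def mult.commute)
  finally show ?thesis .
qed

lemma graph_point_measurable:
  fixes g :: "real^'d \<Rightarrow> real^'n"
  assumes [measurable]: "g \<in> borel_measurable borel"
  shows "(\<lambda>x. (x, g x)) \<in> measurable (uniform_measure lborel \<Omega>) borel"
  unfolding measurable_cong_sets[OF trans[OF sets_uniform_measure sets_lborel] refl]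
  by (intro borel_measurable_Pair) simp_all

lemma sets_graph_measure: "sets (graph_measure \<Omega> g) = sets borel"
  by (simp add: graph_measure_def)

lemma prob_space_graph_measure:
  "g \<in> borel_measurable borel \<Longrightarrow> \<Omega> \<in> sets lborel \<Longrightarrow> 0 < emeasure lborel \<Omega> \<Longrightarrow> emeasure lborel \<Omega> < \<infinity>
    \<Longrightarrow> prob_space (graph_measure \<Omega> g)"
  unfolding graph_measure_def
  by (intro prob_space.prob_space_distr[OF _ graph_point_measurable] prob_space_uniform_measure) auto

lemma AE_graph_measure:
  assumes "g \<in> borel_measurable borel" "\<Omega> \<in> sets lborel"
    and "\<And>x. x \<in> \<Omega> \<Longrightarrow> P (x, g x)" "{z. P z} \<in> sets borel"
  shows "AE z in graph_measure \<Omega> g. P z"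
  unfolding graph_measure_def using assms
  by (subst AE_distr_iff[OF graph_point_measurable]) (auto intro!: AE_uniform_measureI)

lemma integral_graph_measure:
  fixes f :: "(real^'d) \<times> (real^'n) \<Rightarrow> real"
  assumes "g \<in> borel_measurable borel" "\<Omega> \<in> sets lborel" "0 < emeasure lborel \<Omega>" "emeasure lborel \<Omega> < \<infinity>"
    and "f \<in> borel_measurable borel"
  shows "(\<integral>z. f z \<partial>graph_measure \<Omega> g) = (LINT x:\<Omega>|lborel. f (x, g x)) / measure lborel \<Omega>"
proof -
  have "(\<integral>z. f z \<partial>graph_measure \<Omega> g) = (\<integral>x. f (x, g x) \<partial>uniform_measure lborel \<Omega>)"
    unfolding graph_measure_def using assms(5) by (rule integral_distr[OF graph_point_measurable[OF assms(1)]])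
  also have "\<dots> = (LINT x:\<Omega>|lborel. f (x, g x)) / measure lborel \<Omega>"
    using assms by (intro integral_uniform_measure) auto
  finally show ?thesis .
qed

section \<open>Convergence in Wasserstein distance\<close>

lemma ennreal_tendsto_0I:
  assumes "\<And>e. e > 0 \<Longrightarrow> eventually (\<lambda>N. X N \<le> ennreal e) F"
  shows "(X \<longlongrightarrow> (0::ennreal)) F"
proof (rule order_tendstoI)
  fix a :: ennreal assume "0 < a"
  then obtain b where b: "0 < b" "b < a" using dense by blast
  then obtain e where e: "b = ennreal e" "0 < e"
    by (cases b) (auto simp: top_unique dest: order.strict_trans2[OF _ top_greatest])
  show "eventually (\<lambda>N. X N < a) F"
    using assms[OF e(2)] by eventually_elim (use b e in auto)
qed simp

lemma wasserstein_le_if_transport_cost_le: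
  assumes "0 < p" "0 \<le> e" "transport_cost p \<mu> \<nu> \<le> ennreal (e powr p)"
  shows "wasserstein p \<mu> \<nu> \<le> ennreal e"
proof -
  have "transport_cost p \<mu> \<nu> \<noteq> \<top>" using assms(3) by (auto simp: top_unique)
  moreover have "enn2real (transport_cost p \<mu> \<nu>) powr (1 / p) \<le> (e powr p) powr (1 / p)"
    using assms by (intro powr_mono2) (auto simp: enn2real_leI)
  ultimately show ?thesis
    unfolding wasserstein_def using assms(1,2) by (simp add: powr_powr ennreal_leI)
qed

lemma powr_half_le: "0 \<le> e \<Longrightarrow> 1 \<le> p \<Longrightarrow> (e / 2) powr p \<le> e powr p / (2::real)"
proof -
  assume "0 \<le> e" "1 \<le> p"
  moreover have "2 powr 1 \<le> (2::real) powr p" using \<open>1 \<le> p\<close> by (intro powr_mono) auto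
  ultimately have "e powr p / 2 powr p \<le> e powr p / 2"
    by (intro divide_left_mono) auto
  with \<open>0 \<le> e\<close> show ?thesis by (simp add: powr_divide)
qed

lemma compact_finite_ball_cover:
  assumes "compact K" "r > 0"
  obtains C where "finite C" "K \<subseteq> (\<Union>c\<in>C. ball c r)"
proof -
  have "K \<subseteq> (\<Union>c\<in>K. ball c r)" using assms(2) by auto
  from compactE_image[OF assms(1) open_ball this] show thesis using that by blast
qed

lemma open_emeasure_lborel_pos:
  fixes \<Omega> :: "'a::euclidean_space set"
  assumes "open \<Omega>" "\<Omega> \<noteq> {}"
  shows "0 < emeasure lborel \<Omega>"
proof -
  have "\<not> negligible \<Omega>" by (rule open_not_negligible[OF assms])
  then have "emeasure lebesgue \<Omega> \<noteq> 0" using assms(1) by (simp add: negligible_iff_emeasure0)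
  then show ?thesis using assms(1) by (simp add: zero_less_iff_neq_zero)
qed

lemma transport_cost_empirical_graph_le:
  fixes \<Omega> :: "(real^'d) set" and g :: "real^'d \<Rightarrow> real^'n"
  assumes \<Omega>: "\<Omega> \<in> sets lborel" "0 < emeasure lborel \<Omega>" "emeasure lborel \<Omega> < \<infinity>"
    and xs: "\<And>j. j \<ge> 1 \<Longrightarrow> xs j \<in> \<Omega>" and g: "g \<in> borel_measurable borel"
    and K: "compact K" "(\<lambda>x. (x, g x)) ` \<Omega> \<subseteq> K"
    and C: "finite C" "K \<subseteq> (\<Union>c\<in>C. ball c r)"
    and N: "N \<ge> 1" and p: "0 < p"
  shows "transport_cost p (empirical N xs g) (graph_measure \<Omega> g)
    \<le> ennreal ((2 * r) powr p + diameter K powr p * (\<Sum>c\<in>C.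
        \<bar>(\<integral>w. ball_pou C r c w \<partial>graph_measure \<Omega> g) - (\<integral>z. ball_pou C r c z \<partial>empirical N xs g)\<bar>))"
proof -
  let ?\<mu> = "empirical N xs g" and ?\<nu> = "graph_measure \<Omega> g"
  have "pair_prob_space ?\<mu> ?\<nu>"
    using prob_space_empirical[OF N, of xs g] prob_space_graph_measure[OF g \<Omega>]
    by (simp add: pair_prob_space_def pair_sigma_finite_def prob_space_imp_sigma_finite)
  moreover have "partition_coupling_axioms ?\<mu> ?\<nu> C (ball_pou C r)"
    by (intro partition_coupling_axioms.intro sets_empirical sets_graph_measure C(1)
        ball_pou_nonneg ball_pou_measurable) (simp add: sum_ball_pou[OF C(1)])
  ultimately have pc: "partition_coupling ?\<mu> ?\<nu> C (ball_pou C r)"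
    by (rule partition_coupling.intro)
  have K_sets: "K \<in> sets borel" using compact_imp_closed[OF K(1)] by simp
  have cells: "dist z w \<le> 2 * r" if "0 < ball_pou C r c z" "0 < ball_pou C r c w" for c z w
    using ball_pou_pos_imp_dist[OF that(1)] ball_pou_pos_imp_dist[OF that(2)] dist_triangle3[of z w c]
    by (simp add: dist_commute)
  have "AE z in ?\<mu>. z \<in> K"
    using xs K(2) K_sets by (intro AE_empirical) auto
  moreover have "AE w in ?\<nu>. w \<in> K"
    using K(2) K_sets by (intro AE_graph_measure[OF g \<Omega>(1)]) auto
  moreover have "AE w in ?\<nu>. (\<Sum>c\<in>C. ball_pou C r c w) = 1"
  proof (rule AE_graph_measure[OF g \<Omega>(1)])
    fix x assume "x \<in> \<Omega>"
    then have "(x, g x) \<in> (\<Union>c\<in>C. ball c r)" using K(2) C(2) by blast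
    then show "(\<Sum>c\<in>C. ball_pou C r c (x, g x)) = 1" by (simp add: sum_ball_pou[OF C(1)])
  qed simp
  moreover have "dist z w \<le> diameter K" if "z \<in> K" "w \<in> K" for z w
    using diameter_bounded_bound[OF compact_imp_bounded[OF K(1)] that] .
  ultimately show ?thesis
    using partition_coupling.transport_cost_le[OF pc p cells K_sets]
    by (simp add: partition_coupling.mass_def[OF pc])
qed

lemma tendsto_integral_empirical:
  fixes \<Omega> :: "(real^'d) set" and g :: "real^'d \<Rightarrow> real^'n" and \<phi> :: "(real^'d) \<times> (real^'n) \<Rightarrow> real"
  assumes \<Omega>: "open \<Omega>" "bounded \<Omega>" "\<Omega> \<noteq> {}" and xs: "regularly_distributed \<Omega> xs"
    and g: "g \<in> borel_measurable borel" and \<phi>: "\<phi> \<in> borel_measurable borel"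
    and \<phi>_cont: "continuous_on (closure \<Omega>) (\<lambda>x. \<phi> (x, g x))"
  shows "(\<lambda>N. \<integral>z. \<phi> z \<partial>empirical N xs g) \<longlonglongrightarrow> (\<integral>z. \<phi> z \<partial>graph_measure \<Omega> g)"
proof -
  have "(\<lambda>N. (\<Sum>j=1..N. \<phi> (xs j, g (xs j))) / real N)
      \<longlonglongrightarrow> (LINT x:\<Omega>|lborel. \<phi> (x, g x)) / measure lborel \<Omega>"
    using xs \<phi>_cont unfolding regularly_distributed_def by blast
  moreover have "eventually (\<lambda>N. (\<Sum>j=1..N. \<phi> (xs j, g (xs j))) / real N
      = (\<integral>z. \<phi> z \<partial>empirical N xs g)) sequentially"
    using eventually_ge_at_top[of 1] by eventually_elim (simp add: integral_empirical[OF _ \<phi>])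
  moreover have "(LINT x:\<Omega>|lborel. \<phi> (x, g x)) / measure lborel \<Omega> = (\<integral>z. \<phi> z \<partial>graph_measure \<Omega> g)"
    using \<Omega> open_emeasure_lborel_pos[OF \<Omega>(1,3)] emeasure_bounded_finite[OF \<Omega>(2)]
    by (simp add: integral_graph_measure[OF g _ _ _ \<phi>])
  ultimately show ?thesis by (metis (no_types) Lim_transform_eventually)
qed

lemma wasserstein_empirical_graph_tendsto_0:
  fixes \<Omega> :: "(real^'d) set" and g :: "real^'d \<Rightarrow> real^'n"
  assumes \<Omega>: "open \<Omega>" "bounded \<Omega>" "\<Omega> \<noteq> {}" and xs: "regularly_distributed \<Omega> xs"
    and g: "continuous_on UNIV g" and p: "1 \<le> p"
  shows "(\<lambda>N. wasserstein p (empirical N xs g) (graph_measure \<Omega> g)) \<longlonglongrightarrow> 0"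
proof (rule ennreal_tendsto_0I)
  fix e :: real assume e: "e > 0"
  have gm: "g \<in> borel_measurable borel" by (rule borel_measurable_continuous_onI[OF g])
  have \<Omega>_lborel: "\<Omega> \<in> sets lborel" "0 < emeasure lborel \<Omega>" "emeasure lborel \<Omega> < \<infinity>"
    using \<Omega>(1) open_emeasure_lborel_pos[OF \<Omega>(1,3)] emeasure_bounded_finite[OF \<Omega>(2)] by auto
  have xs_\<Omega>: "\<And>j. j \<ge> 1 \<Longrightarrow> xs j \<in> \<Omega>"
    using xs unfolding regularly_distributed_def by blast
  define K where "K = (\<lambda>x. (x, g x)) ` closure \<Omega>"
  have graph_cont: "continuous_on (closure \<Omega>) (\<lambda>x. (x, g x))"
    by (intro continuous_intros continuous_on_subset[OF g]) auto
  have "compact (closure \<Omega>)" using \<Omega>(2) by (simp add: compact_closure)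
  then have "compact K"
    unfolding K_def by (rule compact_continuous_image[OF graph_cont])
  moreover have "(\<lambda>x. (x, g x)) ` \<Omega> \<subseteq> K"
    unfolding K_def by (rule image_mono[OF closure_subset])
  ultimately have K: "compact K" "(\<lambda>x. (x, g x)) ` \<Omega> \<subseteq> K" by blast+
  define r where "r = e / 4"
  have "r > 0" using e by (simp add: r_def)
  then obtain C where C: "finite C" "K \<subseteq> (\<Union>c\<in>C. ball c r)"
    by (rule compact_finite_ball_cover[OF K(1)])
  define a where "a c = (\<integral>w. ball_pou C r c w \<partial>graph_measure \<Omega> g)" for c
  define s where "s c N = (\<integral>z. ball_pou C r c z \<partial>empirical N xs g)" for c N
  have "(\<lambda>N. s c N) \<longlonglongrightarrow> a c" for c
    using C unfolding a_def s_def K_def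
    by (intro tendsto_integral_empirical[OF \<Omega> xs gm] continuous_on_ball_pou[OF C(1) graph_cont]) auto
  then have "(\<lambda>N. diameter K powr p * (\<Sum>c\<in>C. \<bar>a c - s c N\<bar>)) \<longlonglongrightarrow> diameter K powr p * (\<Sum>c\<in>C. \<bar>a c - a c\<bar>)"
    by (intro tendsto_intros)
  then have "eventually (\<lambda>N. diameter K powr p * (\<Sum>c\<in>C. \<bar>a c - s c N\<bar>) < e powr p / 2) sequentially"
    using e by (intro order_tendstoD) auto
  with eventually_ge_at_top[of 1]
  show "eventually (\<lambda>N. wasserstein p (empirical N xs g) (graph_measure \<Omega> g) \<le> ennreal e) sequentially"
  proof eventually_elim
    case (elim N)
    have "transport_cost p (empirical N xs g) (graph_measure \<Omega> g)
        \<le> ennreal ((2 * r) powr p + diameter K powr p * (\<Sum>c\<in>C. \<bar>a c - s c N\<bar>))"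
      unfolding a_def s_def using e p
      by (intro transport_cost_empirical_graph_le[OF \<Omega>_lborel xs_\<Omega> gm K C elim(1)])
        (auto simp: r_def)
    also have "\<dots> \<le> ennreal (e powr p)"
      using powr_half_le[of e p] e p elim(2) by (intro ennreal_leI) (simp add: r_def)
    finally have "transport_cost p (empirical N xs g) (graph_measure \<Omega> g) \<le> ennreal (e powr p)" .
    then show ?case using e p by (intro wasserstein_le_if_transport_cost_le) auto
  qed
qed

theorem propositionF7:
  fixes \<Omega> :: "(real^'d) set" and xs :: "nat \<Rightarrow> real^'d"
    and \<tau> :: real and s :: nat and \<rho> :: "real^'d \<Rightarrow> real"
    and h :: "(real^'d \<Rightarrow> real) \<Rightarrow> real^'n" and p :: real
  assumes "open \<Omega>" and "bounded \<Omega>" and "\<Omega> \<noteq> {}"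
    and "regularly_distributed \<Omega> xs"
    and "\<tau> > 0" and "mollifier \<tau> \<rho>"
    and "H_minus s \<Omega> h"
    and "1 \<le> p"
  shows "(\<lambda>N. wasserstein p (empirical N xs (R_tau \<Omega> \<tau> \<rho> h))
                              (graph_measure \<Omega> (R_tau \<Omega> \<tau> \<rho> h))) \<longlonglongrightarrow> 0"
  using wasserstein_empirical_graph_tendsto_0[OF assms(1-4) continuous_R_tau[OF assms(1,2,5-7)] assms(8)] .

end
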